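(* Let $a<0$, $\sigma>0$, $T>0$, and let $x(t)$ be the solution of $\mathrm{d}x(t)=a\,x(t)\,\mathrm{d}t+\sigma\,\mathrm{d}w(t)$, $x(0)=0$, where $w$ is a standard Wiener process. Let $h>0$ be such that $N=T/h$ is a positive integer, let $M\ge 1$ be an integer and put $B=MN$. Let $x_1,\dots,x_M$ be independent copies of $x$, and define $$\hat V_M(h)=\frac1M\sum_{i=1}^M\sum_{k=0}^{N-1} h\,x_i^2(kh),\qquad V_T=\int_0^T\mathbb{E}[x^2(t)]\,\mathrm{d}t,\qquad \mathrm{MSE}_T(h,B)=\mathbb{E}\big[(\hat V_M(h)-V_T)^2\big].$$ Then $\mathrm{MSE}_T(h,B)=E_1(h,T,a)+\frac{E_2(h,T,a)}{B}$, where $$E_1(h,T,a)=\frac{\sigma^4\left(-2ah+e^{2ah}-1\right)^2\left(e^{2aT}-1\right)^2}{16a^4\left(e^{2ah}-1\right)^2},$$ $$E_2(h,T,a)=\frac{\sigma^4T\left[h\left(e^{2aT}-1\right)\left(4e^{2ah}+e^{2aT}+1\right)-\left(e^{2ah}-1\right)\left(e^{2ah}+4e^{2aT}+1\right)T\right]}{2a^2\left(e^{2ah}-1\right)^2}.$$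
   Context: This is the finite-horizon, undiscounted Monte-Carlo policy evaluation of a one-dimensional Langevin (linear quadratic) system with quadratic cost $x^2$ (cost weight $q=1$): the system horizon equals the estimation horizon $T$, the data budget is $B=M\cdot N$ (number of episodes times number of samples per episode), and $\hat V_M(h)$ is the average over $M$ episodes of the left Riemann sum of the cost with step-size $h$. *)

theory Defs
  imports "HOL-Probability.Probability"
begin

definition wiener_process :: "'a measure \<Rightarrow> (real \<Rightarrow> 'a \<Rightarrow> real) \<Rightarrow> bool" where
  "wiener_process P W \<longleftrightarrow>
     prob_space P \<and>
     (\<forall>t. W t \<in> borel_measurable P) \<and>
     (\<forall>\<omega>\<in>space P. W 0 \<omega> = 0 \<and> continuous_on {0..} (\<lambda>t. W t \<omega>)) \<and>
     (\<forall>s t. 0 \<le> s \<longrightarrow> s < t \<longrightarrow>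
        distributed P lborel (\<lambda>\<omega>. W t \<omega> - W s \<omega>)
          (\<lambda>y. ennreal (normal_density 0 (sqrt (t - s)) y))) \<and>
     (\<forall>(n::nat) (ts::nat \<Rightarrow> real). 0 \<le> ts 0 \<longrightarrow> (\<forall>i<n. ts i < ts (Suc i)) \<longrightarrow>
        prob_space.indep_vars P (\<lambda>_. borel) (\<lambda>i \<omega>. W (ts (Suc i)) \<omega> - W (ts i) \<omega>) {..<n})"

text \<open>X solves dX(t) = a X(t) dt + \<sigma> dW(t), X(0) = 0, written in integral form
  X(t) = \<integral>_0^t a X(s) ds + \<sigma> W(t) (additive noise: the stochastic integral of the
  constant \<sigma> is \<sigma> W(t)); paths of X are continuous.\<close>
definition langevin_solution ::
  "'a measure \<Rightarrow> real \<Rightarrow> real \<Rightarrow> (real \<Rightarrow> 'a \<Rightarrow> real) \<Rightarrow> (real \<Rightarrow> 'a \<Rightarrow> real) \<Rightarrow> bool" where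
  "langevin_solution P a \<sigma> W X \<longleftrightarrow>
     (\<forall>t. X t \<in> borel_measurable P) \<and>
     (\<forall>\<omega>\<in>space P. continuous_on {0..} (\<lambda>t. X t \<omega>) \<and>
        (\<forall>t\<ge>0. X t \<omega> = integral {0..t} (\<lambda>s. a * X s \<omega>) + \<sigma> * W t \<omega>))"

definition E1 :: "real \<Rightarrow> real \<Rightarrow> real \<Rightarrow> real \<Rightarrow> real" where
  "E1 \<sigma> h T a =
     \<sigma>^4 * (-2*a*h + exp (2*a*h) - 1)^2 * (exp (2*a*T) - 1)^2
     / (16 * a^4 * (exp (2*a*h) - 1)^2)"

definition E2 :: "real \<Rightarrow> real \<Rightarrow> real \<Rightarrow> real \<Rightarrow> real" where
  "E2 \<sigma> h T a =
     \<sigma>^4 * T * (h * (exp (2*a*T) - 1) * (4 * exp (2*a*h) + exp (2*a*T) + 1)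
                 - (exp (2*a*h) - 1) * (exp (2*a*h) + 4 * exp (2*a*T) + 1) * T)
     / (2 * a^2 * (exp (2*a*h) - 1)^2)"

end

theory Submission
  imports Defs
begin

text \<open>The solution is a centred Gaussian process with covariance
  \<open>C(s,t) = \<sigma>\<^sup>2 (exp(a(s+t)) - exp(a|t-s|)) / (2a)\<close>.
  To see this without stochastic calculus, compare \<open>x\<close> on a grid of mesh \<open>\<epsilon>\<close> with the exact
  recursion \<open>Z(K+1) = exp(a\<epsilon>) Z(K) + \<sigma> (w((K+1)\<epsilon>) - w(K\<epsilon>))\<close>: by variation of constants, and
  since \<open>a \<le> 0\<close>, the error is controlled by the modulus of continuity of \<open>w\<close>, so \<open>Z\<close> converges
  pathwise to \<open>x\<close>. Every linear combination of the \<open>Z\<close> is a linear combination of independent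
  Gaussian increments, and Levy's uniqueness theorem carries Gaussianity to the limit.
  Polarising the fourth moments of \<open>x(s) \<plusminus> x(t)\<close> gives Isserlis' formula
  \<open>E[x(s)\<^sup>2 x(t)\<^sup>2] = C(s,s) C(t,t) + 2 C(s,t)\<^sup>2\<close>.

  The \<open>M\<close> episode costs are independent, each being a Borel functional of its own Wiener path,
  so the mean squared error is \<open>(m\<^sub>1 - V\<^sub>T)\<^sup>2 + (m\<^sub>2 - m\<^sub>1\<^sup>2)/M\<close> with \<open>m\<^sub>1, m\<^sub>2\<close> the first two
  moments of one episode cost. Both are sums of \<open>C\<close> over the grid, and the resulting geometric
  sums in \<open>exp(2ah)\<close> evaluate to \<open>E1\<close> and \<open>E2/(MN)\<close>.\<close>

section \<open>Pathwise convergence of the exact discretisation\<close>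

text \<open>Variation of constants with the noise frozen at \<open>w(\<tau>)\<close>: only the increment
  \<open>w(r) - w(\<tau>)\<close> drives \<open>exp(-ar) (x(r) - \<sigma>(w(r) - w(\<tau>)))\<close>.\<close>
lemma langevin_frozen_noise_has_derivative:
  fixes w x :: "real \<Rightarrow> real" and a \<sigma> \<tau> :: real
  assumes \<tau>: "\<tau> \<ge> 0" and r: "r \<in> {\<tau>..b}"
    and cx: "continuous_on {0..} x"
    and eqx: "\<And>t. t \<ge> 0 \<Longrightarrow> x t = integral {0..t} (\<lambda>s. a * x s) + \<sigma> * w t"
  shows "((\<lambda>r. exp (-a*r) * (integral {0..r} (\<lambda>s. a * x s) + \<sigma> * w \<tau>))
    has_field_derivative exp (-a*r) * (a * \<sigma> * (w r - w \<tau>))) (at r within {\<tau>..b})"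
proof -
  have "((\<lambda>r. integral {0..r} (\<lambda>s. a * x s)) has_real_derivative a * x r) (at r within {0..b})"
    using r \<tau> by (intro integral_has_real_derivative continuous_intros continuous_on_subset[OF cx]) auto
  then have "((\<lambda>r. integral {0..r} (\<lambda>s. a * x s)) has_real_derivative a * x r) (at r within {\<tau>..b})"
    by (rule DERIV_subset) (use \<tau> in auto)
  then have "((\<lambda>r. exp (-a*r) * (integral {0..r} (\<lambda>s. a * x s) + \<sigma> * w \<tau>)) has_field_derivative
      exp (-a*r) * (-a) * (integral {0..r} (\<lambda>s. a * x s) + \<sigma> * w \<tau>) + exp (-a*r) * (a * x r))
      (at r within {\<tau>..b})"
    by (auto intro!: derivative_eq_intros simp del: integral_mult_right)
  moreover have "exp (-a*r) * (-a) * (integral {0..r} (\<lambda>s. a * x s) + \<sigma> * w \<tau>) + exp (-a*r) * (a * x r)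
      = exp (-a*r) * (a * \<sigma> * (w r - w \<tau>))"
    using eqx[of r] r \<tau> by (simp add: algebra_simps del: integral_mult_right)
  ultimately show ?thesis
    by (simp only:)
qed

lemma ou_step_error:
  fixes w x :: "real \<Rightarrow> real" and a \<sigma> \<tau> \<delta> \<epsilon> :: real
  assumes a: "a \<le> 0" and \<sigma>: "\<sigma> \<ge> 0" and \<tau>: "\<tau> \<ge> 0" and \<delta>: "\<delta> > 0"
    and cx: "continuous_on {0..} x"
    and eqx: "\<And>t. t \<ge> 0 \<Longrightarrow> x t = integral {0..t} (\<lambda>s. a * x s) + \<sigma> * w t"
    and wb: "\<And>r. r \<in> {\<tau>..\<tau>+\<delta>} \<Longrightarrow> \<bar>w r - w \<tau>\<bar> \<le> \<epsilon>"
  shows "\<bar>x (\<tau>+\<delta>) - exp (a*\<delta>) * x \<tau> - \<sigma> * (w (\<tau>+\<delta>) - w \<tau>)\<bar> \<le> \<delta> * \<bar>a\<bar> * \<sigma> * \<epsilon>"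
proof -
  define S where "S = {\<tau>..\<tau>+\<delta>}"
  define F where "F = (\<lambda>r. exp (-a*r) * (integral {0..r} (\<lambda>s. a * x s) + \<sigma> * w \<tau>))"
  have F_eq: "F r = exp (-a*r) * (x r - \<sigma> * (w r - w \<tau>))" if "r \<in> S" for r
    using eqx[of r] that \<tau> by (auto simp: F_def S_def algebra_simps)
  have dF: "(F has_field_derivative exp (-a*r) * (a * \<sigma> * (w r - w \<tau>))) (at r within S)"
    if "r \<in> S" for r
    using that unfolding F_def S_def by (rule langevin_frozen_noise_has_derivative[OF \<tau> _ cx eqx])
  have bound: "norm (exp (-a*r) * (a * \<sigma> * (w r - w \<tau>))) \<le> exp (-a*(\<tau>+\<delta>)) * (\<bar>a\<bar> * \<sigma> * \<epsilon>)"
    if "r \<in> S" for r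
  proof -
    have "exp (-a*r) \<le> exp (-a*(\<tau>+\<delta>))"
      using that a by (auto simp: S_def mult_left_mono_neg)
    moreover have "\<bar>a * \<sigma> * (w r - w \<tau>)\<bar> \<le> \<bar>a\<bar> * \<sigma> * \<epsilon>"
      using wb[of r] that \<sigma> by (auto simp: S_def abs_mult intro!: mult_left_mono)
    moreover have "0 \<le> \<bar>a\<bar> * \<sigma> * \<epsilon>"
      using wb[of \<tau>] \<sigma> \<delta> by auto
    ultimately show ?thesis
      by (metis abs_exp_cancel abs_mult real_norm_def exp_ge_zero abs_ge_zero mult_mono)
  qed
  have "norm (F (\<tau>+\<delta>) - F \<tau>) \<le> exp (-a*(\<tau>+\<delta>)) * (\<bar>a\<bar> * \<sigma> * \<epsilon>) * norm ((\<tau>+\<delta>) - \<tau>)"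
    by (rule field_differentiable_bound[OF _ dF bound]) (use \<delta> in \<open>auto simp: S_def\<close>)
  then have "\<bar>F (\<tau>+\<delta>) - F \<tau>\<bar> \<le> exp (-a*(\<tau>+\<delta>)) * (\<delta> * \<bar>a\<bar> * \<sigma> * \<epsilon>)"
    using \<delta> by (simp add: algebra_simps)
  moreover have "F (\<tau>+\<delta>) - F \<tau> =
      exp (-a*(\<tau>+\<delta>)) * (x (\<tau>+\<delta>) - exp (a*\<delta>) * x \<tau> - \<sigma> * (w (\<tau>+\<delta>) - w \<tau>))"
  proof -
    have "F \<tau> = exp (-a*\<tau>) * x \<tau>"
      using F_eq[of \<tau>] \<delta> by (simp add: S_def)
    moreover have "F (\<tau>+\<delta>) = exp (-a*(\<tau>+\<delta>)) * (x (\<tau>+\<delta>) - \<sigma> * (w (\<tau>+\<delta>) - w \<tau>))"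
      using F_eq[of "\<tau>+\<delta>"] \<delta> by (simp add: S_def)
    moreover have "exp (-a*\<tau>) = exp (-a*(\<tau>+\<delta>)) * exp (a*\<delta>)"
      by (simp add: exp_add[symmetric] algebra_simps)
    ultimately show ?thesis
      by (simp add: algebra_simps)
  qed
  ultimately have "exp (-a*(\<tau>+\<delta>)) * \<bar>x (\<tau>+\<delta>) - exp (a*\<delta>) * x \<tau> - \<sigma> * (w (\<tau>+\<delta>) - w \<tau>)\<bar>
      \<le> exp (-a*(\<tau>+\<delta>)) * (\<delta> * \<bar>a\<bar> * \<sigma> * \<epsilon>)"
    by (simp add: abs_mult)
  then show ?thesis
    by simp
qed

definition ou_scheme :: "real \<Rightarrow> real \<Rightarrow> (real \<Rightarrow> real) \<Rightarrow> real \<Rightarrow> nat \<Rightarrow> real" where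
  "ou_scheme a \<sigma> w \<epsilon> K =
     \<sigma> * (\<Sum>j<K. exp (a*\<epsilon>)^(K-1-j) * (w (real (Suc j) * \<epsilon>) - w (real j * \<epsilon>)))"

lemma ou_scheme_0 [simp]: "ou_scheme a \<sigma> w \<epsilon> 0 = 0"
  by (simp add: ou_scheme_def)

lemma ou_scheme_Suc:
  "ou_scheme a \<sigma> w \<epsilon> (Suc K) =
     exp (a*\<epsilon>) * ou_scheme a \<sigma> w \<epsilon> K + \<sigma> * (w (real (Suc K) * \<epsilon>) - w (real K * \<epsilon>))"
proof -
  have "exp (a*\<epsilon>)^(K-j) = exp (a*\<epsilon>) * exp (a*\<epsilon>)^(K-1-j)" if "j < K" for j
    using that by (simp flip: power_Suc add: Suc_diff_Suc)
  then have "(\<Sum>j<K. exp (a*\<epsilon>)^(K-j) * (w (real (Suc j) * \<epsilon>) - w (real j * \<epsilon>)))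
      = exp (a*\<epsilon>) * (\<Sum>j<K. exp (a*\<epsilon>)^(K-1-j) * (w (real (Suc j) * \<epsilon>) - w (real j * \<epsilon>)))"
    by (simp add: sum_distrib_left mult.assoc)
  then show ?thesis
    by (simp add: ou_scheme_def algebra_simps)
qed

lemma ou_scheme_error:
  fixes w x :: "real \<Rightarrow> real" and a \<sigma> \<epsilon> \<eta> :: real
  assumes a: "a \<le> 0" and \<sigma>: "\<sigma> \<ge> 0" and \<epsilon>: "\<epsilon> > 0" and w0: "w 0 = 0"
    and cx: "continuous_on {0..} x"
    and eqx: "\<And>t. t \<ge> 0 \<Longrightarrow> x t = integral {0..t} (\<lambda>s. a * x s) + \<sigma> * w t"
    and osc: "\<And>r r'. r \<in> {0..real K*\<epsilon>} \<Longrightarrow> r' \<in> {0..real K*\<epsilon>} \<Longrightarrow> \<bar>r - r'\<bar> \<le> \<epsilon> \<Longrightarrow>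
                \<bar>w r - w r'\<bar> \<le> \<eta>"
  shows "\<bar>x (real K * \<epsilon>) - ou_scheme a \<sigma> w \<epsilon> K\<bar> \<le> real K * \<epsilon> * \<bar>a\<bar> * \<sigma> * \<eta>"
  using osc
proof (induction K)
  case 0
  show ?case using eqx[of 0] w0 by simp
next
  case (Suc K)
  define t where "t = real K * \<epsilon>"
  have t_Suc: "real (Suc K) * \<epsilon> = t + \<epsilon>"
    by (simp add: t_def distrib_right)
  have t0: "t \<ge> 0"
    using \<epsilon> by (simp add: t_def)
  have osc_Suc: "\<And>r r'. r \<in> {0..t+\<epsilon>} \<Longrightarrow> r' \<in> {0..t+\<epsilon>} \<Longrightarrow> \<bar>r - r'\<bar> \<le> \<epsilon> \<Longrightarrow>
      \<bar>w r - w r'\<bar> \<le> \<eta>"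
    using Suc.prems unfolding t_Suc .
  have IH: "\<bar>x t - ou_scheme a \<sigma> w \<epsilon> K\<bar> \<le> t * \<bar>a\<bar> * \<sigma> * \<eta>"
    unfolding t_def by (rule Suc.IH, rule osc_Suc) (use \<epsilon> in \<open>auto simp: t_def\<close>)
  have step: "\<bar>x (t + \<epsilon>) - exp (a*\<epsilon>) * x t - \<sigma> * (w (t + \<epsilon>) - w t)\<bar> \<le> \<epsilon> * \<bar>a\<bar> * \<sigma> * \<eta>"
  proof (rule ou_step_error[OF a \<sigma> _ \<epsilon> cx eqx])
    fix r assume "r \<in> {t..t + \<epsilon>}"
    then show "\<bar>w r - w t\<bar> \<le> \<eta>"
      using \<epsilon> t0 by (intro osc_Suc) auto
  qed (use t0 in auto)
  have "exp (a*\<epsilon>) \<le> 1"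
    using a \<epsilon> by (simp add: mult_nonpos_nonneg)
  then have contraction: "\<bar>exp (a*\<epsilon>) * (x t - ou_scheme a \<sigma> w \<epsilon> K)\<bar> \<le> t * \<bar>a\<bar> * \<sigma> * \<eta>"
    using IH unfolding abs_mult abs_exp_cancel
    by (metis abs_ge_zero exp_ge_zero mult_left_le_one_le order_trans)
  have "x (real (Suc K) * \<epsilon>) - ou_scheme a \<sigma> w \<epsilon> (Suc K)
      = (x (t + \<epsilon>) - exp (a*\<epsilon>) * x t - \<sigma> * (w (t + \<epsilon>) - w t))
        + exp (a*\<epsilon>) * (x t - ou_scheme a \<sigma> w \<epsilon> K)"
    unfolding ou_scheme_Suc t_Suc by (simp add: t_def algebra_simps)
  then have "\<bar>x (real (Suc K) * \<epsilon>) - ou_scheme a \<sigma> w \<epsilon> (Suc K)\<bar>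
      \<le> \<bar>x (t + \<epsilon>) - exp (a*\<epsilon>) * x t - \<sigma> * (w (t + \<epsilon>) - w t)\<bar>
        + \<bar>exp (a*\<epsilon>) * (x t - ou_scheme a \<sigma> w \<epsilon> K)\<bar>"
    by (simp only: abs_triangle_ineq)
  also have "\<dots> \<le> \<epsilon> * \<bar>a\<bar> * \<sigma> * \<eta> + t * \<bar>a\<bar> * \<sigma> * \<eta>"
    using step contraction by linarith
  also have "\<dots> = real (Suc K) * \<epsilon> * \<bar>a\<bar> * \<sigma> * \<eta>"
    unfolding t_Suc by (simp add: algebra_simps)
  finally show ?case .
qed

lemma ou_scheme_tendsto:
  fixes w x :: "real \<Rightarrow> real" and a \<sigma> \<delta> :: real
  assumes a: "a \<le> 0" and \<sigma>: "\<sigma> \<ge> 0" and \<delta>: "\<delta> > 0" and w0: "w 0 = 0"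
    and cw: "continuous_on {0..} w" and cx: "continuous_on {0..} x"
    and eqx: "\<And>t. t \<ge> 0 \<Longrightarrow> x t = integral {0..t} (\<lambda>s. a * x s) + \<sigma> * w t"
  shows "(\<lambda>n. ou_scheme a \<sigma> w (\<delta> / real (Suc n)) (K * Suc n)) \<longlonglongrightarrow> x (real K * \<delta>)"
proof (rule LIMSEQ_I)
  fix e :: real assume e: "e > 0"
  define C where "C = real K * \<delta> * \<bar>a\<bar> * \<sigma> + 1"
  have C: "C > 0"
    unfolding C_def using \<delta> \<sigma> by (intro add_nonneg_pos mult_nonneg_nonneg) auto
  define \<eta> where "\<eta> = e / (2*C)"
  have \<eta>: "\<eta> > 0" using e C by (simp add: \<eta>_def)
  have "uniformly_continuous_on {0..real K * \<delta>} w"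
    by (rule compact_uniformly_continuous) (auto intro: continuous_on_subset[OF cw])
  then obtain d where d: "d > 0" and d_osc: "\<And>r r'. r \<in> {0..real K * \<delta>} \<Longrightarrow> r' \<in> {0..real K * \<delta>}
      \<Longrightarrow> dist r' r < d \<Longrightarrow> dist (w r') (w r) < \<eta>"
    unfolding uniformly_continuous_on_def using \<eta> by metis
  obtain n0 :: nat where n0: "\<delta> / d < real n0"
    using reals_Archimedean2 by blast
  show "\<exists>n0. \<forall>n\<ge>n0. norm (ou_scheme a \<sigma> w (\<delta> / real (Suc n)) (K * Suc n) - x (real K * \<delta>)) < e"
  proof (intro exI allI impI)
    fix n assume "n \<ge> n0"
    define \<epsilon> where "\<epsilon> = \<delta> / real (Suc n)"
    have \<epsilon>: "\<epsilon> > 0" using \<delta> by (simp add: \<epsilon>_def)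
    have "\<delta> / d < real (Suc n)"
      using n0 \<open>n \<ge> n0\<close> by linarith
    then have "\<epsilon> < d"
      using d \<delta> unfolding \<epsilon>_def by (simp add: field_simps)
    moreover have grid: "real (K * Suc n) * \<epsilon> = real K * \<delta>"
      unfolding \<epsilon>_def by (simp add: field_simps)
    ultimately have "\<bar>x (real K * \<delta>) - ou_scheme a \<sigma> w \<epsilon> (K * Suc n)\<bar> \<le> real K * \<delta> * \<bar>a\<bar> * \<sigma> * \<eta>"
      using ou_scheme_error[OF a \<sigma> \<epsilon> w0 cx eqx, of "K * Suc n" \<eta>] d_osc
      by (fastforce simp: dist_real_def mult.assoc)
    also have "\<dots> \<le> C * \<eta>"
      unfolding C_def using \<eta> by (simp add: algebra_simps)
    also have "\<dots> < e"
      unfolding \<eta>_def using C e by simp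
    finally show "norm (ou_scheme a \<sigma> w (\<delta> / real (Suc n)) (K * Suc n) - x (real K * \<delta>)) < e"
      by (simp add: \<epsilon>_def abs_minus_commute)
  qed
qed

section \<open>Gaussian laws via characteristic functions\<close>

lemma (in prob_space) char_centred_normal:
  assumes D: "distributed M lborel D (\<lambda>y. ennreal (normal_density 0 s y))" and s: "s > 0"
  shows "(CLINT \<omega>|M. iexp (t * D \<omega>)) = complex_of_real (exp (-(s^2 * t^2)/2))"
proof -
  have [measurable]: "D \<in> borel_measurable M"
    using D by (simp add: distributed_def)
  have "distributed M lborel (\<lambda>\<omega>. (D \<omega> - 0) / s) (\<lambda>y. ennreal (std_normal_density y))"
    using normal_standard_normal_convert[OF s] D by blast
  then have std: "distr M lborel (\<lambda>\<omega>. D \<omega> / s) = std_normal_distribution"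
    by (simp add: distributed_def)
  have "(CLINT \<omega>|M. iexp (t * D \<omega>)) = (CLINT \<omega>|M. iexp ((t * s) * (D \<omega> / s)))"
    using s by (simp add: field_simps)
  also have "\<dots> = (CLINT y|distr M lborel (\<lambda>\<omega>. D \<omega> / s). iexp ((t * s) * y))"
    by (subst integral_distr) auto
  also have "\<dots> = char std_normal_distribution (t * s)"
    unfolding std char_def by simp
  also have "\<dots> = complex_of_real (exp (-(s^2 * t^2)/2))"
    unfolding char_std_normal_distribution by (simp add: power_mult_distrib mult.commute)
  finally show ?thesis .
qed

lemma (in prob_space) char_indep_normal_lincomb:
  assumes ind: "indep_vars (\<lambda>_. borel) D I" and fin: "finite I"
    and normal: "\<And>j. j \<in> I \<Longrightarrow> distributed M lborel (D j) (\<lambda>y. ennreal (normal_density 0 s y))"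
    and s: "s > 0"
  shows "(CLINT \<omega>|M. iexp (u * (\<Sum>j\<in>I. c j * D j \<omega>)))
    = complex_of_real (exp (-(s^2 * (\<Sum>j\<in>I. (c j)^2) * u^2)/2))"
proof -
  have ind_c: "indep_vars (\<lambda>_. borel) (\<lambda>j \<omega>. c j * D j \<omega>) I"
    by (rule indep_vars_compose2[OF ind]) auto
  have rv: "random_variable borel (D j)" if "j \<in> I" for j
    using ind that by (auto simp: indep_vars_def)
  have "(CLINT \<omega>|M. iexp (u * (\<Sum>j\<in>I. c j * D j \<omega>))) = char (distr M borel (\<lambda>\<omega>. \<Sum>j\<in>I. c j * D j \<omega>)) u"
    unfolding char_def using rv by (subst integral_distr) auto
  also have "\<dots> = (\<Prod>j\<in>I. char (distr M borel (\<lambda>\<omega>. c j * D j \<omega>)) u)"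
    by (rule char_distr_sum[OF ind_c])
  also have "\<dots> = (\<Prod>j\<in>I. complex_of_real (exp (-(s^2 * (u * c j)^2)/2)))"
  proof (rule prod.cong[OF refl])
    fix j assume j: "j \<in> I"
    have "char (distr M borel (\<lambda>\<omega>. c j * D j \<omega>)) u = (CLINT \<omega>|M. iexp ((u * c j) * D j \<omega>))"
      unfolding char_def using rv[OF j] by (subst integral_distr) (auto simp: mult.assoc)
    also have "\<dots> = complex_of_real (exp (-(s^2 * (u * c j)^2)/2))"
      by (rule char_centred_normal[OF normal[OF j] s])
    finally show "char (distr M borel (\<lambda>\<omega>. c j * D j \<omega>)) u = complex_of_real (exp (-(s^2 * (u * c j)^2)/2))" .
  qed
  also have "\<dots> = complex_of_real (exp (\<Sum>j\<in>I. -(s^2 * (u * c j)^2)/2))"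
    by (simp add: exp_sum[OF fin])
  also have "(\<Sum>j\<in>I. -(s^2 * (u * c j)^2)/2) = -(s^2 * (\<Sum>j\<in>I. (c j)^2) * u^2)/2"
    by (simp add: sum_divide_distrib[symmetric] sum_negf sum_distrib_left sum_distrib_right
        power_mult_distrib algebra_simps)
  finally show ?thesis .
qed

text \<open>The characteristic functions converge by dominated convergence, and Levy's uniqueness
  theorem identifies the limit law.\<close>
lemma (in prob_space) std_normal_of_gaussian_limit:
  fixes Y :: "'a \<Rightarrow> real" and Yn :: "nat \<Rightarrow> 'a \<Rightarrow> real"
  assumes [measurable]: "\<And>n. Yn n \<in> borel_measurable M" "Y \<in> borel_measurable M"
    and lim: "\<And>\<omega>. \<omega> \<in> space M \<Longrightarrow> (\<lambda>n. Yn n \<omega>) \<longlonglongrightarrow> Y \<omega>"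
    and char_Yn: "\<And>n u. (CLINT \<omega>|M. iexp (u * Yn n \<omega>)) = complex_of_real (exp (-(v n * u^2)/2))"
    and v: "v \<longlonglongrightarrow> v0" and v0: "v0 > 0"
  shows "distr M borel (\<lambda>\<omega>. Y \<omega> / sqrt v0) = std_normal_distribution"
proof (rule Levy_uniqueness)
  show "real_distribution (distr M borel (\<lambda>\<omega>. Y \<omega> / sqrt v0))"
    by (rule real_distribution_distr) simp
  show "real_distribution std_normal_distribution"
    by (rule real_dist_normal_dist)
  show "char (distr M borel (\<lambda>\<omega>. Y \<omega> / sqrt v0)) = char std_normal_distribution"
  proof
    fix u :: real
    define u' where "u' = u / sqrt v0"
    have "char (distr M borel (\<lambda>\<omega>. Y \<omega> / sqrt v0)) u = (CLINT \<omega>|M. iexp (u' * Y \<omega>))"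
      unfolding char_def u'_def by (subst integral_distr) auto
    moreover have "(\<lambda>n. CLINT \<omega>|M. iexp (u' * Yn n \<omega>)) \<longlonglongrightarrow> (CLINT \<omega>|M. iexp (u' * Y \<omega>))"
    proof (rule integral_dominated_convergence[where w="\<lambda>_. 1"])
      show "AE \<omega> in M. (\<lambda>n. iexp (u' * Yn n \<omega>)) \<longlonglongrightarrow> iexp (u' * Y \<omega>)"
        by (intro AE_I2 isCont_tendsto_compose[OF isCont_iexp] tendsto_mult_left lim)
      show "\<And>n. AE \<omega> in M. norm (iexp (u' * Yn n \<omega>)) \<le> 1"
        by (simp del: of_real_mult)
    qed auto
    moreover have "(\<lambda>n. complex_of_real (exp (-(v n * u'^2)/2)))
        \<longlonglongrightarrow> complex_of_real (exp (-(v0 * u'^2)/2))"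
      by (intro tendsto_intros v) simp
    moreover have "v0 * u'^2 = u^2"
      using v0 by (simp add: u'_def power_divide)
    ultimately have "char (distr M borel (\<lambda>\<omega>. Y \<omega> / sqrt v0)) u = complex_of_real (exp (-(u^2)/2))"
      unfolding char_Yn using LIMSEQ_unique by metis
    then show "char (distr M borel (\<lambda>\<omega>. Y \<omega> / sqrt v0)) u = char std_normal_distribution u"
      unfolding char_std_normal_distribution by simp
  qed
qed

lemma (in prob_space) scaled_std_normal_moments:
  fixes Y :: "'a \<Rightarrow> real"
  assumes [measurable]: "Y \<in> borel_measurable M"
    and std: "distr M borel (\<lambda>\<omega>. Y \<omega> / sqrt v) = std_normal_distribution" and v: "v > 0"
  shows "integrable M (\<lambda>\<omega>. (Y \<omega>)^2)" "expectation (\<lambda>\<omega>. (Y \<omega>)^2) = v"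
    "integrable M (\<lambda>\<omega>. (Y \<omega>)^4)" "expectation (\<lambda>\<omega>. (Y \<omega>)^4) = 3 * v^2"
proof -
  have int: "integrable M (\<lambda>\<omega>. (Y \<omega> / sqrt v)^k)" for k
  proof -
    have "integrable (distr M borel (\<lambda>\<omega>. Y \<omega> / sqrt v)) (\<lambda>x. x^k)"
      unfolding std by (rule integrable_std_normal_distribution_moment)
    then show ?thesis
      by (subst (asm) integrable_distr_eq) auto
  qed
  have even: "expectation (\<lambda>\<omega>. (Y \<omega> / sqrt v)^(2*k)) = fact (2 * k) / (2^k * fact k)" for k
  proof -
    have "expectation (\<lambda>\<omega>. (Y \<omega> / sqrt v)^(2*k)) = (LINT x|distr M borel (\<lambda>\<omega>. Y \<omega> / sqrt v). x^(2*k))"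
      by (subst integral_distr) auto
    then show ?thesis
      unfolding std using std_normal_distribution_even_moments(1) by simp
  qed
  have sq: "(Y \<omega>)^2 = v * (Y \<omega> / sqrt v)^2" for \<omega>
    using v by (simp add: power_divide)
  have quartic: "(Y \<omega>)^4 = v^2 * (Y \<omega> / sqrt v)^4" for \<omega>
  proof -
    have "(sqrt v)^4 = v^2"
      using v by (metis less_imp_le numeral_Bit0 power_add power_mult real_sqrt_pow2 mult_2)
    then show ?thesis
      using v by (simp add: power_divide)
  qed
  show "integrable M (\<lambda>\<omega>. (Y \<omega>)^2)" "integrable M (\<lambda>\<omega>. (Y \<omega>)^4)"
    unfolding sq quartic using int by auto
  show "expectation (\<lambda>\<omega>. (Y \<omega>)^2) = v"
    unfolding sq using even[of 1] by simp
  show "expectation (\<lambda>\<omega>. (Y \<omega>)^4) = 3 * v^2"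
    unfolding quartic using even[of 2] by (simp add: fact_numeral)
qed

section \<open>Gaussianity of the Langevin solution\<close>

lemma wiener_grid_increments:
  assumes W: "wiener_process P W" and \<epsilon>: "\<epsilon> > 0"
  shows "prob_space.indep_vars P (\<lambda>_. borel) (\<lambda>j \<omega>. W (real (Suc j) * \<epsilon>) \<omega> - W (real j * \<epsilon>) \<omega>) {..<L}"
    and "distributed P lborel (\<lambda>\<omega>. W (real (Suc j) * \<epsilon>) \<omega> - W (real j * \<epsilon>) \<omega>)
           (\<lambda>y. ennreal (normal_density 0 (sqrt \<epsilon>) y))"
proof -
  have "prob_space.indep_vars P (\<lambda>_. borel)
      (\<lambda>i \<omega>. W ((\<lambda>j. real j * \<epsilon>) (Suc i)) \<omega> - W ((\<lambda>j. real j * \<epsilon>) i) \<omega>) {..<L}"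
    using W \<epsilon> unfolding wiener_process_def
    by (elim conjE allE[of _ L] allE[of _ "\<lambda>j. real j * \<epsilon>"]) (simp add: distrib_right)
  then show "prob_space.indep_vars P (\<lambda>_. borel) (\<lambda>j \<omega>. W (real (Suc j) * \<epsilon>) \<omega> - W (real j * \<epsilon>) \<omega>) {..<L}"
    by simp
  have "\<forall>s t. 0 \<le> s \<longrightarrow> s < t \<longrightarrow> distributed P lborel (\<lambda>\<omega>. W t \<omega> - W s \<omega>)
      (\<lambda>y. ennreal (normal_density 0 (sqrt (t - s)) y))"
    using W unfolding wiener_process_def by blast
  moreover have "0 \<le> real j * \<epsilon>" "real j * \<epsilon> < real (Suc j) * \<epsilon>" "real (Suc j) * \<epsilon> - real j * \<epsilon> = \<epsilon>"
    using \<epsilon> by (auto simp: distrib_right)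
  ultimately show "distributed P lborel (\<lambda>\<omega>. W (real (Suc j) * \<epsilon>) \<omega> - W (real j * \<epsilon>) \<omega>)
      (\<lambda>y. ennreal (normal_density 0 (sqrt \<epsilon>) y))"
    by metis
qed

lemma sum_lessThan_if_less:
  fixes f :: "nat \<Rightarrow> 'a::comm_monoid_add"
  assumes "A \<le> B"
  shows "(\<Sum>j<B. if j < A then f j else 0) = (\<Sum>j<A. f j)"
proof -
  have "(\<Sum>j<B. if j < A then f j else 0) = (\<Sum>j\<in>{..<B} \<inter> {j. j < A}. f j)"
    by (simp add: sum.inter_restrict)
  also have "{..<B} \<inter> {j. j < A} = {..<A}"
    using assms by auto
  finally show ?thesis .
qed

lemma ou_scheme_lincomb:
  assumes "A \<le> B"
  shows "u1 * ou_scheme a \<sigma> w \<epsilon> A + u2 * ou_scheme a \<sigma> w \<epsilon> B =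
    (\<Sum>j<B. \<sigma> * (u1 * (if j < A then exp (a*\<epsilon>)^(A-1-j) else 0) + u2 * exp (a*\<epsilon>)^(B-1-j))
            * (w (real (Suc j) * \<epsilon>) - w (real j * \<epsilon>)))"
proof -
  define d where "d j = w (real (Suc j) * \<epsilon>) - w (real j * \<epsilon>)" for j
  have "\<sigma> * (u1 * (if j < A then exp (a*\<epsilon>)^(A-1-j) else 0) + u2 * exp (a*\<epsilon>)^(B-1-j)) * d j
      = \<sigma> * u1 * (if j < A then exp (a*\<epsilon>)^(A-1-j) * d j else 0) + \<sigma> * u2 * (exp (a*\<epsilon>)^(B-1-j) * d j)"
    for j by (simp add: algebra_simps)
  then have "(\<Sum>j<B. \<sigma> * (u1 * (if j < A then exp (a*\<epsilon>)^(A-1-j) else 0) + u2 * exp (a*\<epsilon>)^(B-1-j)) * d j)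
      = \<sigma> * u1 * (\<Sum>j<B. if j < A then exp (a*\<epsilon>)^(A-1-j) * d j else 0)
        + \<sigma> * u2 * (\<Sum>j<B. exp (a*\<epsilon>)^(B-1-j) * d j)"
    by (simp only: sum.distrib sum_distrib_left)
  also have "\<dots> = \<sigma> * u1 * (\<Sum>j<A. exp (a*\<epsilon>)^(A-1-j) * d j) + \<sigma> * u2 * (\<Sum>j<B. exp (a*\<epsilon>)^(B-1-j) * d j)"
    by (simp only: sum_lessThan_if_less[OF assms])
  finally show ?thesis
    by (simp add: ou_scheme_def d_def algebra_simps)
qed

lemma sum_sq_ou_coeffs:
  fixes \<rho> \<sigma> u1 u2 :: real
  assumes AB: "A \<le> B"
  shows "(\<Sum>j<B. (\<sigma> * (u1 * (if j < A then \<rho>^(A-1-j) else 0) + u2 * \<rho>^(B-1-j)))^2)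
    = \<sigma>^2 * (u1^2 * (\<Sum>i<A. (\<rho>^2)^i) + 2*u1*u2 * \<rho>^(B-A) * (\<Sum>i<A. (\<rho>^2)^i) + u2^2 * (\<Sum>i<B. (\<rho>^2)^i))"
proof -
  have summand: "(\<sigma> * (u1 * (if j < A then \<rho>^(A-1-j) else 0) + u2 * \<rho>^(B-1-j)))^2
     = \<sigma>^2 * (u1^2 * (if j < A then (\<rho>^2)^(A-1-j) else 0)
        + 2*u1*u2 * \<rho>^(B-A) * (if j < A then (\<rho>^2)^(A-1-j) else 0) + u2^2 * (\<rho>^2)^(B-1-j))"
    if "j < B" for j
  proof (cases "j < A")
    case True
    then have "(A-1-j) + (B-1-j) = (B-A) + 2*(A-1-j)"
      using AB by simp
    then have "\<rho>^(A-1-j) * \<rho>^(B-1-j) = \<rho>^(B-A) * (\<rho>^2)^(A-1-j)"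
      by (metis power_add power_mult)
    then show ?thesis
      using True by (simp add: power2_eq_square power_mult_distrib algebra_simps power_mult[symmetric])
  next
    case False
    then show ?thesis
      by (simp add: power2_eq_square power_mult_distrib algebra_simps power_mult[symmetric])
  qed
  have reverse: "(\<Sum>j<L. (\<rho>^2)^(L-1-j)) = (\<Sum>i<L. (\<rho>^2)^i)" for L
    using sum.nat_diff_reindex[of "\<lambda>i. (\<rho>^2)^i" L] by simp
  have "(\<Sum>j<B. (\<sigma> * (u1 * (if j < A then \<rho>^(A-1-j) else 0) + u2 * \<rho>^(B-1-j)))^2)
    = \<sigma>^2 * (u1^2 * (\<Sum>j<B. if j < A then (\<rho>^2)^(A-1-j) else 0)
        + 2*u1*u2 * \<rho>^(B-A) * (\<Sum>j<B. if j < A then (\<rho>^2)^(A-1-j) else 0)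
        + u2^2 * (\<Sum>j<B. (\<rho>^2)^(B-1-j)))"
    by (subst sum.cong[OF refl summand], simp) (simp only: distrib_left sum.distrib sum_distrib_left)
  then show ?thesis
    unfolding sum_lessThan_if_less[OF AB] reverse .
qed

lemma ou_scheme_lincomb_variance:
  fixes a \<epsilon> \<sigma> u1 u2 :: real
  assumes a: "a \<noteq> 0" and \<epsilon>: "\<epsilon> \<noteq> 0" and AB: "A \<le> B"
  shows "\<epsilon> * (\<Sum>j<B. (\<sigma> * (u1 * (if j < A then exp (a*\<epsilon>)^(A-1-j) else 0) + u2 * exp (a*\<epsilon>)^(B-1-j)))^2)
    = \<epsilon> / (exp (2*a*\<epsilon>) - 1) * (\<sigma>^2 * (u1^2 * (exp (2*a*(real A*\<epsilon>)) - 1)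
        + 2*u1*u2 * exp (a*(real (B-A)*\<epsilon>)) * (exp (2*a*(real A*\<epsilon>)) - 1)
        + u2^2 * (exp (2*a*(real B*\<epsilon>)) - 1)))"
proof -
  have ne1: "exp (2*a*\<epsilon>) - 1 \<noteq> 0"
    using a \<epsilon> by simp
  have geometric: "(\<Sum>i<L. (exp (a*\<epsilon>)^2)^i) = (exp (2*a*(real L*\<epsilon>)) - 1) / (exp (2*a*\<epsilon>) - 1)" for L
  proof -
    have sq: "exp (a*\<epsilon>)^2 = exp (2*a*\<epsilon>)"
      by (metis exp_double mult.assoc)
    have "exp (2*a*\<epsilon>)^L = exp (2*a*(real L*\<epsilon>))"
      by (simp add: exp_of_nat_mult[symmetric] algebra_simps)
    then have "(exp (2*a*\<epsilon>) - 1) * (\<Sum>i<L. exp (2*a*\<epsilon>)^i) = exp (2*a*(real L*\<epsilon>)) - 1"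
      by (metis power_diff_1_eq)
    then show ?thesis
      unfolding sq using ne1 by (metis nonzero_mult_div_cancel_left)
  qed
  have R: "exp (a*\<epsilon>)^(B-A) = exp (a*(real (B-A)*\<epsilon>))"
    by (simp add: exp_of_nat_mult[symmetric] algebra_simps)
  have normalise: "\<epsilon> * (\<sigma>^2 * (u1^2 * ((EA - 1) / (x - 1)) + 2*u1*u2 * r * ((EA - 1) / (x - 1))
        + u2^2 * ((EB - 1) / (x - 1))))
      = \<epsilon> / (x - 1) * (\<sigma>^2 * (u1^2 * (EA - 1) + 2*u1*u2 * r * (EA - 1) + u2^2 * (EB - 1)))"
    for x r EA EB :: real
    by (simp add: divide_inverse algebra_simps)
  show ?thesis
    unfolding sum_sq_ou_coeffs[OF AB] geometric R by (rule normalise)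
qed

lemma tendsto_div_exp_minus_one:
  fixes c :: real and e :: "nat \<Rightarrow> real"
  assumes c: "c \<noteq> 0" and e: "e \<longlonglongrightarrow> 0" and e_ne: "\<And>n. e n \<noteq> 0"
  shows "(\<lambda>n. e n / (exp (c * e n) - 1)) \<longlonglongrightarrow> 1 / c"
proof -
  have "((\<lambda>y::real. (exp y - 1) / y) \<longlongrightarrow> 1) (at 0)"
    using DERIV_exp[of 0] unfolding has_field_derivative_iff by simp
  moreover have "filterlim (\<lambda>n. c * e n) (at 0) sequentially"
    using tendsto_mult_right_zero[OF e, of c] c e_ne by (simp add: filterlim_at)
  ultimately have "(\<lambda>n. (exp (c * e n) - 1) / (c * e n)) \<longlonglongrightarrow> 1"
    using filterlim_compose by blast
  then have "(\<lambda>n. (1 / c) / ((exp (c * e n) - 1) / (c * e n))) \<longlonglongrightarrow> (1 / c) / 1"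
    by (intro tendsto_intros) auto
  moreover have "(\<lambda>n. (1 / c) / ((exp (c * e n) - 1) / (c * e n))) = (\<lambda>n. e n / (exp (c * e n) - 1))"
  proof
    fix n
    have "exp (c * e n) \<noteq> 1"
      using c e_ne[of n] by simp
    then show "(1 / c) / ((exp (c * e n) - 1) / (c * e n)) = e n / (exp (c * e n) - 1)"
      using c e_ne[of n] by (simp add: field_simps)
  qed
  ultimately show ?thesis
    by simp
qed

definition ou_cov :: "real \<Rightarrow> real \<Rightarrow> real \<Rightarrow> real \<Rightarrow> real" where
  "ou_cov a \<sigma> s t = \<sigma>^2 * (exp (a*(s+t)) - exp (a*\<bar>t-s\<bar>)) / (2*a)"

lemma ou_cov_commute: "ou_cov a \<sigma> s t = ou_cov a \<sigma> t s"
  by (simp add: ou_cov_def add.commute abs_minus_commute)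

lemma ou_cov_quadratic_form:
  assumes "s \<le> t"
  shows "u1^2 * ou_cov a \<sigma> s s + 2*u1*u2 * ou_cov a \<sigma> s t + u2^2 * ou_cov a \<sigma> t t
    = \<sigma>^2 * (u1^2 * (exp (2*a * s) - 1) + 2*u1*u2 * exp (a*(t-s)) * (exp (2*a * s) - 1)
        + u2^2 * (exp (2*a*t) - 1)) / (2*a)"
proof -
  have "exp (a*(s+t)) = exp (a*(t-s)) * exp (2*a * s)"
    by (simp add: exp_add[symmetric] algebra_simps)
  then show ?thesis
    using assms by (cases "a = 0") (simp_all add: ou_cov_def field_simps)
qed

lemma char_ou_scheme_lincomb:
  fixes P :: "'a measure" and W :: "real \<Rightarrow> 'a \<Rightarrow> real"
  assumes W: "wiener_process P W" and \<epsilon>: "\<epsilon> > 0" and AB: "A \<le> B"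
  shows "(CLINT \<omega>|P. iexp (u * (u1 * ou_scheme a \<sigma> (\<lambda>t. W t \<omega>) \<epsilon> A + u2 * ou_scheme a \<sigma> (\<lambda>t. W t \<omega>) \<epsilon> B)))
    = complex_of_real (exp (-((\<epsilon> * (\<Sum>j<B. (\<sigma> * (u1 * (if j < A then exp (a*\<epsilon>)^(A-1-j) else 0)
        + u2 * exp (a*\<epsilon>)^(B-1-j)))^2)) * u^2)/2))"
proof -
  interpret prob_space P
    using W by (simp add: wiener_process_def)
  define c where "c j = \<sigma> * (u1 * (if j < A then exp (a*\<epsilon>)^(A-1-j) else 0) + u2 * exp (a*\<epsilon>)^(B-1-j))" for j
  define D where "D j \<omega> = W (real (Suc j) * \<epsilon>) \<omega> - W (real j * \<epsilon>) \<omega>" for j \<omega>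
  have "(CLINT \<omega>|P. iexp (u * (\<Sum>j<B. c j * D j \<omega>)))
      = complex_of_real (exp (-((sqrt \<epsilon>)^2 * (\<Sum>j<B. (c j)^2) * u^2)/2))"
    using wiener_grid_increments[OF W \<epsilon>] \<epsilon>
    by (intro char_indep_normal_lincomb) (auto simp: D_def)
  then show ?thesis
    using \<epsilon> ou_scheme_lincomb[OF AB] by (simp add: c_def D_def)
qed

lemma ou_scheme_lincomb_variance_tendsto:
  fixes a \<sigma> \<delta> u1 u2 :: real
  assumes a: "a < 0" and \<delta>: "\<delta> > 0" and JK: "J \<le> K"
    and v: "v = u1^2 * ou_cov a \<sigma> (real J*\<delta>) (real J*\<delta>) + 2*u1*u2 * ou_cov a \<sigma> (real J*\<delta>) (real K*\<delta>)
              + u2^2 * ou_cov a \<sigma> (real K*\<delta>) (real K*\<delta>)"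
  defines "\<epsilon> \<equiv> \<lambda>n. \<delta> / real (Suc n)"
  shows "(\<lambda>n. \<epsilon> n * (\<Sum>j<K*Suc n. (\<sigma> * (u1 * (if j < J*Suc n then exp (a*\<epsilon> n)^(J*Suc n-1-j) else 0)
      + u2 * exp (a*\<epsilon> n)^(K*Suc n-1-j)))^2)) \<longlonglongrightarrow> v"
proof -
  have \<epsilon>_pos: "\<epsilon> n > 0" for n
    using \<delta> by (simp add: \<epsilon>_def)
  have "2*a * v = \<sigma>^2 * (u1^2 * (exp (2*a*(real J*\<delta>)) - 1)
      + 2*u1*u2 * exp (a*(real K*\<delta> - real J*\<delta>)) * (exp (2*a*(real J*\<delta>)) - 1)
      + u2^2 * (exp (2*a*(real K*\<delta>)) - 1))" (is "_ = ?Q")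
    unfolding v ou_cov_quadratic_form[OF mult_right_mono[OF of_nat_mono[OF JK] less_imp_le[OF \<delta>]]]
    using a by simp
  then have v_eq: "1 / (2*a) * ?Q = v"
    using a by (simp flip: \<open>2*a * v = ?Q\<close>)
  have variance_eq: "\<epsilon> n * (\<Sum>j<K*Suc n. (\<sigma> * (u1 * (if j < J*Suc n then exp (a*\<epsilon> n)^(J*Suc n-1-j) else 0)
      + u2 * exp (a*\<epsilon> n)^(K*Suc n-1-j)))^2) = \<epsilon> n / (exp (2*a*\<epsilon> n) - 1) * ?Q" for n
  proof -
    have JKn: "J*Suc n \<le> K*Suc n"
      using JK by (rule mult_le_mono1)
    have grid: "real (J*Suc n) * \<epsilon> n = real J * \<delta>" "real (K*Suc n) * \<epsilon> n = real K * \<delta>"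
      "real (K*Suc n - J*Suc n) * \<epsilon> n = real K * \<delta> - real J * \<delta>"
      by (simp_all only: of_nat_diff[OF JKn]) (simp_all add: \<epsilon>_def field_simps)
    show ?thesis
      using ou_scheme_lincomb_variance[OF _ _ JKn, of a "\<epsilon> n" \<sigma> u1 u2] a \<epsilon>_pos[of n]
      unfolding grid by simp
  qed
  have "(\<lambda>n. \<epsilon> n / (exp (2*a*\<epsilon> n) - 1) * ?Q) \<longlonglongrightarrow> 1 / (2*a) * ?Q"
  proof (intro tendsto_mult_right tendsto_div_exp_minus_one)
    show "\<epsilon> \<longlonglongrightarrow> 0"
      using tendsto_mult_right_zero[OF LIMSEQ_inverse_real_of_nat, of \<delta>]
      by (simp add: \<epsilon>_def divide_inverse)
  qed (use a \<epsilon>_pos in \<open>auto simp: less_imp_neq[symmetric]\<close>)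
  then show ?thesis
    unfolding variance_eq v_eq .
qed

text \<open>On the grid of mesh \<open>\<delta>/(n+1)\<close>, \<open>u\<^sub>1 x(J\<delta>) + u\<^sub>2 x(K\<delta>)\<close> is approximated by the same
  combination of exact-scheme values, which is a linear combination of independent Gaussian
  increments of \<open>w\<close>.\<close>
lemma langevin_lincomb_std_normal:
  fixes P :: "'a measure" and W X :: "real \<Rightarrow> 'a \<Rightarrow> real"
  assumes W: "wiener_process P W" and X: "langevin_solution P a \<sigma> W X"
    and a: "a < 0" and \<sigma>: "\<sigma> \<ge> 0" and \<delta>: "\<delta> > 0" and JK: "J \<le> K"
    and v: "v = u1^2 * ou_cov a \<sigma> (real J*\<delta>) (real J*\<delta>) + 2*u1*u2 * ou_cov a \<sigma> (real J*\<delta>) (real K*\<delta>)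
              + u2^2 * ou_cov a \<sigma> (real K*\<delta>) (real K*\<delta>)"
    and v_pos: "v > 0"
  shows "distr P borel (\<lambda>\<omega>. (u1 * X (real J*\<delta>) \<omega> + u2 * X (real K*\<delta>) \<omega>) / sqrt v)
    = std_normal_distribution"
proof -
  interpret prob_space P
    using W by (simp add: wiener_process_def)
  have [measurable]: "\<And>t. W t \<in> borel_measurable P"
    using W by (simp add: wiener_process_def)
  have [measurable]: "\<And>t. X t \<in> borel_measurable P"
    using X by (simp add: langevin_solution_def)
  define Y where "Y n \<omega> = u1 * ou_scheme a \<sigma> (\<lambda>t. W t \<omega>) (\<delta> / real (Suc n)) (J*Suc n)
      + u2 * ou_scheme a \<sigma> (\<lambda>t. W t \<omega>) (\<delta> / real (Suc n)) (K*Suc n)" for n \<omega>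
  have lim: "(\<lambda>n. Y n \<omega>) \<longlonglongrightarrow> u1 * X (real J*\<delta>) \<omega> + u2 * X (real K*\<delta>) \<omega>" if "\<omega> \<in> space P" for \<omega>
  proof -
    have w0: "W 0 \<omega> = 0" and cw: "continuous_on {0..} (\<lambda>t. W t \<omega>)"
      using W that by (auto simp: wiener_process_def)
    have cx: "continuous_on {0..} (\<lambda>t. X t \<omega>)"
      and eqx: "\<And>t. t \<ge> 0 \<Longrightarrow> X t \<omega> = integral {0..t} (\<lambda>s. a * X s \<omega>) + \<sigma> * W t \<omega>"
      using X that by (auto simp: langevin_solution_def)
    note scheme_tendsto = ou_scheme_tendsto[OF less_imp_le[OF a] \<sigma> \<delta> w0 cw cx eqx]
    show ?thesis
      unfolding Y_def by (intro tendsto_intros scheme_tendsto)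
  qed
  have char_Y: "(CLINT \<omega>|P. iexp (u * Y n \<omega>)) = complex_of_real (exp (-((\<delta> / real (Suc n)
      * (\<Sum>j<K*Suc n. (\<sigma> * (u1 * (if j < J*Suc n then exp (a*(\<delta> / real (Suc n)))^(J*Suc n-1-j) else 0)
        + u2 * exp (a*(\<delta> / real (Suc n)))^(K*Suc n-1-j)))^2)) * u^2)/2))" for n u
    unfolding Y_def using \<delta> by (intro char_ou_scheme_lincomb[OF W] mult_le_mono1[OF JK]) simp
  show ?thesis
    by (rule std_normal_of_gaussian_limit[OF _ _ lim char_Y
          ou_scheme_lincomb_variance_tendsto[OF a \<delta> JK v] v_pos])
      (auto simp: Y_def ou_scheme_def)
qed

section \<open>Second and fourth moments\<close>

lemma langevin_at_zero:
  assumes "wiener_process P W" and "langevin_solution P a \<sigma> W X" and "\<omega> \<in> space P"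
  shows "X 0 \<omega> = 0"
  using assms by (auto simp: wiener_process_def langevin_solution_def)

lemma ou_cov_diag_pos:
  assumes a: "a < 0" and \<sigma>: "\<sigma> \<noteq> 0" and t: "t > 0"
  shows "ou_cov a \<sigma> t t > 0"
proof -
  have "exp (a*(t+t)) < 1"
    using a t by (simp add: mult_neg_pos)
  then have "\<sigma>^2 * (exp (a*(t+t)) - 1) < 0"
    using \<sigma> by (simp add: mult_pos_neg)
  then show ?thesis
    unfolding ou_cov_def using a by (simp add: divide_neg_neg)
qed

lemma ou_cov_pm_numerator_neg:
  fixes p q e :: real
  assumes p: "0 < p" "p < 1" and q: "0 < q" "q < 1" and e: "e = 1 \<or> e = -1"
  shows "(p^2 - 1) + 2*e*q*(p^2 - 1) + (p^2*q^2 - 1) < 0"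
  using e
proof
  have p2: "p^2 < 1"
    using p by (simp add: power_less_one_iff)
  {
    assume "e = 1"
    have "p^2*q^2 < 1 * 1"
      using p2 q by (intro mult_strict_mono) (simp_all add: power_less_one_iff)
    moreover have "2*q*(p^2 - 1) < 0"
      using p2 q by (simp add: mult_pos_neg)
    ultimately show ?thesis
      using p2 \<open>e = 1\<close> by simp
  next
    assume "e = -1"
    have "p^2 * (1 - q) < 2"
      using p2 q by (smt (verit) mult_left_le_one_le zero_le_power2)
    then have "(1 - q) * (p^2 * (1 - q) - 2) < 0"
      using q by (simp add: mult_pos_neg)
    then show ?thesis
      using \<open>e = -1\<close> by (simp add: algebra_simps power2_eq_square)
  }
qed

lemma ou_cov_pm_pos:
  assumes a: "a < 0" and \<sigma>: "\<sigma> \<noteq> 0" and st: "0 < s" "s < t" and e: "e = 1 \<or> e = -1"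
  shows "ou_cov a \<sigma> s s + 2*e * ou_cov a \<sigma> s t + ou_cov a \<sigma> t t > 0"
proof -
  define p where "p = exp (a * s)"
  define q where "q = exp (a*(t-s))"
  have p: "0 < p" "p < 1" and q: "0 < q" "q < 1"
    using a st by (auto simp: p_def q_def mult_neg_pos)
  have exp_2s: "exp (2*a * s) = p^2"
    unfolding p_def by (metis exp_double mult.assoc)
  have "p * q = exp (a*t)"
    by (simp add: p_def q_def exp_add[symmetric] algebra_simps)
  then have exp_2t: "exp (2*a*t) = p^2 * q^2"
    by (metis exp_double mult.assoc power_mult_distrib)
  have "\<sigma>^2 * ((p^2 - 1) + 2*e*q*(p^2 - 1) + (p^2*q^2 - 1)) / (2*a) > 0"
    using ou_cov_pm_numerator_neg[OF p q e] a \<sigma> by (simp add: mult_pos_neg divide_neg_neg)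
  moreover have "e^2 = 1"
    using e by auto
  ultimately show ?thesis
    using ou_cov_quadratic_form[of s t 1 a \<sigma> e] st by (simp add: exp_2s exp_2t q_def)
qed

lemma langevin_lincomb_moments:
  fixes P :: "'a measure" and W X :: "real \<Rightarrow> 'a \<Rightarrow> real"
  assumes W: "wiener_process P W" and X: "langevin_solution P a \<sigma> W X"
    and a: "a < 0" and \<sigma>: "\<sigma> \<ge> 0" and \<delta>: "\<delta> > 0" and JK: "J \<le> K"
    and v: "v = u1^2 * ou_cov a \<sigma> (real J*\<delta>) (real J*\<delta>) + 2*u1*u2 * ou_cov a \<sigma> (real J*\<delta>) (real K*\<delta>)
              + u2^2 * ou_cov a \<sigma> (real K*\<delta>) (real K*\<delta>)"
    and v_pos: "v > 0"
  defines "Y \<equiv> \<lambda>\<omega>. u1 * X (real J*\<delta>) \<omega> + u2 * X (real K*\<delta>) \<omega>"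
  shows "integrable P (\<lambda>\<omega>. (Y \<omega>)^2)" "prob_space.expectation P (\<lambda>\<omega>. (Y \<omega>)^2) = v"
    "integrable P (\<lambda>\<omega>. (Y \<omega>)^4)" "prob_space.expectation P (\<lambda>\<omega>. (Y \<omega>)^4) = 3 * v^2"
proof -
  interpret prob_space P
    using W by (simp add: wiener_process_def)
  have [measurable]: "\<And>t. X t \<in> borel_measurable P"
    using X by (simp add: langevin_solution_def)
  note moments = scaled_std_normal_moments[OF _ langevin_lincomb_std_normal[OF W X a \<sigma> \<delta> JK v v_pos] v_pos]
  show "integrable P (\<lambda>\<omega>. (Y \<omega>)^2)" "expectation (\<lambda>\<omega>. (Y \<omega>)^2) = v"
    "integrable P (\<lambda>\<omega>. (Y \<omega>)^4)" "expectation (\<lambda>\<omega>. (Y \<omega>)^4) = 3 * v^2"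
    using moments unfolding Y_def by simp_all
qed

lemma langevin_moments:
  fixes P :: "'a measure" and W X :: "real \<Rightarrow> 'a \<Rightarrow> real"
  assumes W: "wiener_process P W" and X: "langevin_solution P a \<sigma> W X"
    and a: "a < 0" and \<sigma>: "\<sigma> > 0" and t: "t \<ge> 0"
  shows "integrable P (\<lambda>\<omega>. (X t \<omega>)^2)" "prob_space.expectation P (\<lambda>\<omega>. (X t \<omega>)^2) = ou_cov a \<sigma> t t"
    "integrable P (\<lambda>\<omega>. (X t \<omega>)^4)" "prob_space.expectation P (\<lambda>\<omega>. (X t \<omega>)^4) = 3 * (ou_cov a \<sigma> t t)^2"
proof -
  interpret prob_space P
    using W by (simp add: wiener_process_def)
  have "(integrable P (\<lambda>\<omega>. (X t \<omega>)^2) \<and> expectation (\<lambda>\<omega>. (X t \<omega>)^2) = ou_cov a \<sigma> t t) \<and>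
    (integrable P (\<lambda>\<omega>. (X t \<omega>)^4) \<and> expectation (\<lambda>\<omega>. (X t \<omega>)^4) = 3 * (ou_cov a \<sigma> t t)^2)"
  proof (cases "t = 0")
    case True
    have [measurable]: "X t \<in> borel_measurable P"
      using X by (simp add: langevin_solution_def)
    have zero: "AE \<omega> in P. (X t \<omega>)^k = 0" if "k > 0" for k :: nat
      using langevin_at_zero[OF W X] True that by (intro AE_I2) simp
    have "integrable P (\<lambda>\<omega>. (X t \<omega>)^k) \<and> expectation (\<lambda>\<omega>. (X t \<omega>)^k) = 0" if "k > 0" for k :: nat
      using integrable_cong_AE[of "\<lambda>\<omega>. (X t \<omega>)^k" P "\<lambda>_. 0"] zero[OF that]
        integral_eq_zero_AE[OF zero[OF that]] by simp
    moreover have "ou_cov a \<sigma> t t = 0"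
      using True by (simp add: ou_cov_def)
    ultimately show ?thesis
      by simp
  next
    case False
    then have t_pos: "t > 0"
      using t by simp
    have v: "ou_cov a \<sigma> t t = 0^2 * ou_cov a \<sigma> (real 1 * t) (real 1 * t)
        + 2*0*1 * ou_cov a \<sigma> (real 1 * t) (real 1 * t) + 1^2 * ou_cov a \<sigma> (real 1 * t) (real 1 * t)"
      by simp
    from langevin_lincomb_moments[OF W X a less_imp_le[OF \<sigma>] t_pos order_refl v
        ou_cov_diag_pos[OF a _ t_pos]] \<sigma>
    show ?thesis
      by simp
  qed
  then show "integrable P (\<lambda>\<omega>. (X t \<omega>)^2)" "expectation (\<lambda>\<omega>. (X t \<omega>)^2) = ou_cov a \<sigma> t t"
    "integrable P (\<lambda>\<omega>. (X t \<omega>)^4)" "expectation (\<lambda>\<omega>. (X t \<omega>)^4) = 3 * (ou_cov a \<sigma> t t)^2"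
    by auto
qed

text \<open>Isserlis' formula, obtained by polarisation from the fourth moments of the Gaussians
  \<open>x(s) \<plusminus> x(t)\<close>.\<close>
lemma langevin_isserlis_interior:
  fixes P :: "'a measure" and W X :: "real \<Rightarrow> 'a \<Rightarrow> real"
  assumes W: "wiener_process P W" and X: "langevin_solution P a \<sigma> W X"
    and a: "a < 0" and \<sigma>: "\<sigma> > 0" and h: "h > 0" and jk: "0 < j" "j < k"
  defines "s \<equiv> real j * h" and "t \<equiv> real k * h"
  shows "integrable P (\<lambda>\<omega>. (X s \<omega>)^2 * (X t \<omega>)^2) \<and>
    prob_space.expectation P (\<lambda>\<omega>. (X s \<omega>)^2 * (X t \<omega>)^2)
      = ou_cov a \<sigma> s s * ou_cov a \<sigma> t t + 2 * (ou_cov a \<sigma> s t)^2"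
proof -
  interpret prob_space P
    using W by (simp add: wiener_process_def)
  have [measurable]: "\<And>t. X t \<in> borel_measurable P"
    using X by (simp add: langevin_solution_def)
  have s_pos: "0 < s" and s_lt: "s < t"
    using jk h by (simp_all add: s_def t_def)
  define v where "v e = ou_cov a \<sigma> s s + 2*e * ou_cov a \<sigma> s t + ou_cov a \<sigma> t t" for e
  have fourth: "integrable P (\<lambda>\<omega>. (X s \<omega> + e * X t \<omega>)^4)
      \<and> expectation (\<lambda>\<omega>. (X s \<omega> + e * X t \<omega>)^4) = 3 * (v e)^2" if e: "e = 1 \<or> e = -1" for e
  proof -
    have "v e = 1^2 * ou_cov a \<sigma> (real j*h) (real j*h) + 2*1*e * ou_cov a \<sigma> (real j*h) (real k*h)
        + e^2 * ou_cov a \<sigma> (real k*h) (real k*h)"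
      using e by (auto simp: v_def s_def t_def)
    from langevin_lincomb_moments(3,4)[OF W X a less_imp_le[OF \<sigma>] h less_imp_le[OF jk(2)] this]
    show ?thesis
      using ou_cov_pm_pos[OF a _ s_pos s_lt e] \<sigma> by (simp add: v_def s_def t_def)
  qed
  note plus = fourth[of 1, simplified] and minus = fourth[of "-1", simplified]
  note single = langevin_moments(3,4)[OF W X a \<sigma> less_imp_le[OF s_pos]]
    langevin_moments(3,4)[OF W X a \<sigma> less_imp_le[OF order.strict_trans[OF s_pos s_lt]]]
  have polar: "(x::real)^2 * y^2 = ((x + y)^4 + (x - y)^4 - 2*x^4 - 2*y^4) / 12" for x y
    by (simp add: power2_eq_square power4_eq_xxxx field_simps)
  have "integrable P (\<lambda>\<omega>. ((X s \<omega> + X t \<omega>)^4 + (X s \<omega> - X t \<omega>)^4 - 2*(X s \<omega>)^4 - 2*(X t \<omega>)^4) / 12)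
    \<and> expectation (\<lambda>\<omega>. ((X s \<omega> + X t \<omega>)^4 + (X s \<omega> - X t \<omega>)^4 - 2*(X s \<omega>)^4 - 2*(X t \<omega>)^4) / 12)
      = (3 * (v 1)^2 + 3 * (v (-1))^2 - 2 * (3 * (ou_cov a \<sigma> s s)^2) - 2 * (3 * (ou_cov a \<sigma> t t)^2)) / 12"
    using plus minus single by (simp add: integral_diff integral_add integrable_diff integrable_add)
  moreover have "(3 * (v 1)^2 + 3 * (v (-1))^2 - 2 * (3 * (ou_cov a \<sigma> s s)^2) - 2 * (3 * (ou_cov a \<sigma> t t)^2)) / 12
      = ou_cov a \<sigma> s s * ou_cov a \<sigma> t t + 2 * (ou_cov a \<sigma> s t)^2"
    by (simp add: v_def power2_eq_square field_simps)
  ultimately show ?thesis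
    unfolding polar[symmetric] by simp
qed

lemma langevin_isserlis_ordered:
  fixes P :: "'a measure" and W X :: "real \<Rightarrow> 'a \<Rightarrow> real"
  assumes W: "wiener_process P W" and X: "langevin_solution P a \<sigma> W X"
    and a: "a < 0" and \<sigma>: "\<sigma> > 0" and h: "h > 0" and jk: "j \<le> k"
  defines "s \<equiv> real j * h" and "t \<equiv> real k * h"
  shows "integrable P (\<lambda>\<omega>. (X s \<omega>)^2 * (X t \<omega>)^2) \<and>
    prob_space.expectation P (\<lambda>\<omega>. (X s \<omega>)^2 * (X t \<omega>)^2)
      = ou_cov a \<sigma> s s * ou_cov a \<sigma> t t + 2 * (ou_cov a \<sigma> s t)^2"
proof -
  interpret prob_space P
    using W by (simp add: wiener_process_def)
  consider "j = 0" | "j = k" | "0 < j" "j < k"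
    using jk by linarith
  then show ?thesis
  proof cases
    case 1
    have [measurable]: "\<And>t. X t \<in> borel_measurable P"
      using X by (simp add: langevin_solution_def)
    have zero: "AE \<omega> in P. (X s \<omega>)^2 * (X t \<omega>)^2 = 0"
      using langevin_at_zero[OF W X] 1 by (intro AE_I2) (simp add: s_def)
    have "ou_cov a \<sigma> s s = 0" "ou_cov a \<sigma> s t = 0"
      using 1 h by (simp_all add: s_def t_def ou_cov_def)
    then show ?thesis
      using integrable_cong_AE[of "\<lambda>\<omega>. (X s \<omega>)^2 * (X t \<omega>)^2" P "\<lambda>_. 0"] zero
        integral_eq_zero_AE[OF zero] by simp
  next
    case 2
    then have "(X s \<omega>)^2 * (X t \<omega>)^2 = (X t \<omega>)^4" for \<omega>
      by (simp add: s_def t_def power2_eq_square power4_eq_xxxx)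
    then show ?thesis
      using langevin_moments[OF W X a \<sigma>, of t] h 2 by (simp add: s_def t_def power2_eq_square)
  next
    case 3
    then show ?thesis
      unfolding s_def t_def by (rule langevin_isserlis_interior[OF W X a \<sigma> h])
  qed
qed

lemma langevin_isserlis:
  fixes P :: "'a measure" and W X :: "real \<Rightarrow> 'a \<Rightarrow> real"
  assumes W: "wiener_process P W" and X: "langevin_solution P a \<sigma> W X"
    and a: "a < 0" and \<sigma>: "\<sigma> > 0" and h: "h > 0"
  shows "integrable P (\<lambda>\<omega>. (X (real j*h) \<omega>)^2 * (X (real k*h) \<omega>)^2) \<and>
    prob_space.expectation P (\<lambda>\<omega>. (X (real j*h) \<omega>)^2 * (X (real k*h) \<omega>)^2)
      = ou_cov a \<sigma> (real j*h) (real j*h) * ou_cov a \<sigma> (real k*h) (real k*h)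
        + 2 * (ou_cov a \<sigma> (real j*h) (real k*h))^2"
proof (cases "j \<le> k")
  case True
  then show ?thesis
    using langevin_isserlis_ordered[OF W X a \<sigma> h] by blast
next
  case False
  then have "k \<le> j"
    by simp
  from langevin_isserlis_ordered[OF W X a \<sigma> h this] show ?thesis
    unfolding ou_cov_commute[of a \<sigma> "real k*h" "real j*h"] by (simp add: mult.commute)
qed

section \<open>Independent episodes\<close>

text \<open>Reading \<open>x(kh)\<close> off the driving path as a limit of the exact scheme makes it a Borel
  functional of that path; this is how independence of the Wiener processes passes to the
  episode costs.\<close>
definition ou_grid_value :: "real \<Rightarrow> real \<Rightarrow> real \<Rightarrow> nat \<Rightarrow> (real \<Rightarrow> real) \<Rightarrow> real" where
  "ou_grid_value a \<sigma> h k f = lim (\<lambda>n. ou_scheme a \<sigma> f (h / real (Suc n)) (k * Suc n))"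

lemma ou_grid_value_measurable [measurable]:
  "ou_grid_value a \<sigma> h k \<in> borel_measurable (Pi\<^sub>M UNIV (\<lambda>_::real. borel))"
proof -
  have "(\<lambda>f. ou_scheme a \<sigma> f \<epsilon> L) \<in> borel_measurable (Pi\<^sub>M UNIV (\<lambda>_::real. borel))" for \<epsilon> L
    unfolding ou_scheme_def by measurable
  then have "(\<lambda>f. lim (\<lambda>n. ou_scheme a \<sigma> f (h / real (Suc n)) (k * Suc n)))
      \<in> borel_measurable (Pi\<^sub>M UNIV (\<lambda>_::real. borel))"
    by (rule borel_measurable_lim_metric)
  then show ?thesis
    unfolding ou_grid_value_def[abs_def] .
qed

lemma langevin_eq_ou_grid_value:
  assumes W: "wiener_process P W" and X: "langevin_solution P a \<sigma> W X"
    and a: "a \<le> 0" and \<sigma>: "\<sigma> \<ge> 0" and h: "h > 0" and \<omega>: "\<omega> \<in> space P"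
  shows "X (real k * h) \<omega> = ou_grid_value a \<sigma> h k (\<lambda>t. W t \<omega>)"
proof -
  have w0: "W 0 \<omega> = 0" and cw: "continuous_on {0..} (\<lambda>t. W t \<omega>)"
    using W \<omega> by (auto simp: wiener_process_def)
  have cx: "continuous_on {0..} (\<lambda>t. X t \<omega>)"
    and eqx: "\<And>t. t \<ge> 0 \<Longrightarrow> X t \<omega> = integral {0..t} (\<lambda>s. a * X s \<omega>) + \<sigma> * W t \<omega>"
    using X \<omega> by (auto simp: langevin_solution_def)
  show ?thesis
    unfolding ou_grid_value_def
    by (rule limI[symmetric], rule ou_scheme_tendsto[OF a \<sigma> h w0 cw cx eqx])
qed

lemma grid_cost_moments:
  fixes P :: "'a measure" and W X :: "real \<Rightarrow> 'a \<Rightarrow> real"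
  assumes W: "wiener_process P W" and X: "langevin_solution P a \<sigma> W X"
    and a: "a < 0" and \<sigma>: "\<sigma> > 0" and h: "h > 0"
  shows "integrable P (\<lambda>\<omega>. (\<Sum>k<N. h * (X (real k*h) \<omega>)^2)^2)"
    "prob_space.expectation P (\<lambda>\<omega>. \<Sum>k<N. h * (X (real k*h) \<omega>)^2)
       = (\<Sum>k<N. h * ou_cov a \<sigma> (real k*h) (real k*h))"
    "prob_space.expectation P (\<lambda>\<omega>. (\<Sum>k<N. h * (X (real k*h) \<omega>)^2)^2)
       = (\<Sum>k<N. \<Sum>l<N. h^2 * (ou_cov a \<sigma> (real k*h) (real k*h) * ou_cov a \<sigma> (real l*h) (real l*h)
            + 2 * (ou_cov a \<sigma> (real k*h) (real l*h))^2))"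
proof -
  interpret prob_space P
    using W by (simp add: wiener_process_def)
  have t0: "real k * h \<ge> 0" for k
    using h by simp
  note single = langevin_moments(1,2)[OF W X a \<sigma> t0]
  note pair = langevin_isserlis[OF W X a \<sigma> h]
  have sq: "(\<Sum>k<N. h * (X (real k*h) \<omega>)^2)^2
      = (\<Sum>k<N. \<Sum>l<N. h^2 * ((X (real k*h) \<omega>)^2 * (X (real l*h) \<omega>)^2))" for \<omega>
    by (simp add: power2_eq_square sum_product algebra_simps)
  show "integrable P (\<lambda>\<omega>. (\<Sum>k<N. h * (X (real k*h) \<omega>)^2)^2)"
    unfolding sq using pair by simp
  show "expectation (\<lambda>\<omega>. \<Sum>k<N. h * (X (real k*h) \<omega>)^2) = (\<Sum>k<N. h * ou_cov a \<sigma> (real k*h) (real k*h))"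
    using single by (simp add: Bochner_Integration.integral_sum)
  show "expectation (\<lambda>\<omega>. (\<Sum>k<N. h * (X (real k*h) \<omega>)^2)^2)
       = (\<Sum>k<N. \<Sum>l<N. h^2 * (ou_cov a \<sigma> (real k*h) (real k*h) * ou_cov a \<sigma> (real l*h) (real l*h)
            + 2 * (ou_cov a \<sigma> (real k*h) (real l*h))^2))"
    unfolding sq using pair by (simp add: Bochner_Integration.integral_sum)
qed

lemma (in prob_space) indep_vars_cong_on_space:
  assumes "\<And>i \<omega>. i \<in> I \<Longrightarrow> \<omega> \<in> space M \<Longrightarrow> X i \<omega> = Y i \<omega>"
  shows "indep_vars M' X I \<longleftrightarrow> indep_vars M' Y I"
proof -
  have "X i -` A \<inter> space M = Y i -` A \<inter> space M" if "i \<in> I" for i A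
    using assms that by auto
  moreover have "X i \<in> measurable M (M' i) \<longleftrightarrow> Y i \<in> measurable M (M' i)" if "i \<in> I" for i
    using assms that by (intro measurable_cong) auto
  ultimately show ?thesis
    unfolding indep_vars_def2 by (intro conj_cong ball_cong indep_sets_cong refl) auto
qed

lemma (in prob_space) indep_vars_expectation_mult:
  fixes S :: "'i \<Rightarrow> 'a \<Rightarrow> real"
  assumes ind: "indep_vars (\<lambda>_. borel) S I" and ij: "i \<in> I" "j \<in> I" "i \<noteq> j"
    and int: "integrable M (S i)" "integrable M (S j)"
  shows "integrable M (\<lambda>\<omega>. S i \<omega> * S j \<omega>)"
    and "expectation (\<lambda>\<omega>. S i \<omega> * S j \<omega>) = expectation (S i) * expectation (S j)"
proof -
  have ind_ij: "indep_vars (\<lambda>_. borel) S {i, j}"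
    by (rule indep_vars_subset[OF ind]) (use ij in auto)
  have int_ij: "\<And>l. l \<in> {i, j} \<Longrightarrow> integrable M (S l)"
    using int by auto
  have prod: "(\<lambda>\<omega>. \<Prod>l\<in>{i, j}. S l \<omega>) = (\<lambda>\<omega>. S i \<omega> * S j \<omega>)"
    using ij by simp
  show "integrable M (\<lambda>\<omega>. S i \<omega> * S j \<omega>)"
    using indep_vars_integrable[OF _ ind_ij int_ij] unfolding prod by simp
  show "expectation (\<lambda>\<omega>. S i \<omega> * S j \<omega>) = expectation (S i) * expectation (S j)"
    using indep_vars_lebesgue_integral[OF _ ind_ij int_ij] ij unfolding prod by simp
qed

lemma (in prob_space) indep_sum_moments:
  fixes S :: "'i \<Rightarrow> 'a \<Rightarrow> real"
  assumes fin: "finite I" and ind: "indep_vars (\<lambda>_. borel) S I"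
    and sq_int: "\<And>i. i \<in> I \<Longrightarrow> integrable M (\<lambda>\<omega>. (S i \<omega>)^2)"
    and mean: "\<And>i. i \<in> I \<Longrightarrow> expectation (S i) = m1"
    and second: "\<And>i. i \<in> I \<Longrightarrow> expectation (\<lambda>\<omega>. (S i \<omega>)^2) = m2"
  shows "integrable M (\<lambda>\<omega>. \<Sum>i\<in>I. S i \<omega>)"
    and "expectation (\<lambda>\<omega>. \<Sum>i\<in>I. S i \<omega>) = real (card I) * m1"
    and "integrable M (\<lambda>\<omega>. (\<Sum>i\<in>I. S i \<omega>)^2)"
    and "expectation (\<lambda>\<omega>. (\<Sum>i\<in>I. S i \<omega>)^2)
      = real (card I) * m2 + real (card I) * (real (card I) - 1) * m1^2"
proof -
  have int: "integrable M (S i)" if "i \<in> I" for i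
  proof -
    have "S i \<in> borel_measurable M"
      using ind that unfolding indep_vars_def2 by blast
    then show ?thesis
      by (rule square_integrable_imp_integrable) (rule sq_int[OF that])
  qed
  show "integrable M (\<lambda>\<omega>. \<Sum>i\<in>I. S i \<omega>)"
    using int by (intro Bochner_Integration.integrable_sum)
  show "expectation (\<lambda>\<omega>. \<Sum>i\<in>I. S i \<omega>) = real (card I) * m1"
    using int mean by (simp add: Bochner_Integration.integral_sum)
  have pair: "integrable M (\<lambda>\<omega>. S i \<omega> * S j \<omega>)
      \<and> expectation (\<lambda>\<omega>. S i \<omega> * S j \<omega>) = (if i = j then m2 else m1^2)"
    if i: "i \<in> I" and j: "j \<in> I" for i j
  proof (cases "i = j")
    case True
    then show ?thesis
      using sq_int[OF i] second[OF i] by (simp add: power2_eq_square)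
  next
    case False
    then show ?thesis
      using indep_vars_expectation_mult[OF ind i j False int[OF i] int[OF j]] mean i j
      by (simp add: power2_eq_square)
  qed
  have sq: "(\<Sum>i\<in>I. S i \<omega>)^2 = (\<Sum>i\<in>I. \<Sum>j\<in>I. S i \<omega> * S j \<omega>)" for \<omega>
    by (simp add: power2_eq_square sum_product)
  show "integrable M (\<lambda>\<omega>. (\<Sum>i\<in>I. S i \<omega>)^2)"
    unfolding sq using pair by (intro Bochner_Integration.integrable_sum) auto
  have "expectation (\<lambda>\<omega>. (\<Sum>i\<in>I. S i \<omega>)^2) = (\<Sum>i\<in>I. \<Sum>j\<in>I. if i = j then m2 else m1^2)"
    unfolding sq using pair
    by (simp add: Bochner_Integration.integral_sum Bochner_Integration.integrable_sum)
  also have "\<dots> = (\<Sum>i\<in>I. \<Sum>j\<in>I. m1^2 + (if i = j then m2 - m1^2 else 0))"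
    by (intro sum.cong) auto
  also have "\<dots> = real (card I) * m2 + real (card I) * (real (card I) - 1) * m1^2"
    using fin by (simp add: sum.distrib algebra_simps power2_eq_square)
  finally show "expectation (\<lambda>\<omega>. (\<Sum>i\<in>I. S i \<omega>)^2)
      = real (card I) * m2 + real (card I) * (real (card I) - 1) * m1^2" .
qed

lemma (in prob_space) indep_sample_mean_mse:
  fixes S :: "'i \<Rightarrow> 'a \<Rightarrow> real"
  assumes fin: "finite I" and ne: "I \<noteq> {}" and ind: "indep_vars (\<lambda>_. borel) S I"
    and sq_int: "\<And>i. i \<in> I \<Longrightarrow> integrable M (\<lambda>\<omega>. (S i \<omega>)^2)"
    and mean: "\<And>i. i \<in> I \<Longrightarrow> expectation (S i) = m1"
    and second: "\<And>i. i \<in> I \<Longrightarrow> expectation (\<lambda>\<omega>. (S i \<omega>)^2) = m2"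
  shows "expectation (\<lambda>\<omega>. ((1 / real (card I)) * (\<Sum>i\<in>I. S i \<omega>) - V)^2)
    = (m1 - V)^2 + (m2 - m1^2) / real (card I)"
proof -
  define n where "n = real (card I)"
  have n: "n > 0"
    using fin ne by (simp add: n_def card_gt_0_iff)
  note sum_moments = indep_sum_moments[OF fin ind sq_int mean second]
  have "((1 / n) * (\<Sum>i\<in>I. S i \<omega>) - V)^2
      = (1 / n^2) * (\<Sum>i\<in>I. S i \<omega>)^2 - (2 * V / n) * (\<Sum>i\<in>I. S i \<omega>) + V^2" for \<omega>
    using n by (simp add: power2_eq_square field_simps)
  then have "expectation (\<lambda>\<omega>. ((1 / n) * (\<Sum>i\<in>I. S i \<omega>) - V)^2)
      = (1 / n^2) * (n * m2 + n * (n - 1) * m1^2) - (2 * V / n) * (n * m1) + V^2"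
    using sum_moments by (simp add: n_def prob_space)
  also have "\<dots> = (m1 - V)^2 + (m2 - m1^2) / n"
    using n by (simp add: power2_eq_square field_simps)
  finally show ?thesis
    unfolding n_def .
qed

section \<open>Closed forms\<close>

definition grid_kernel :: "real \<Rightarrow> nat \<Rightarrow> nat \<Rightarrow> real" where
  "grid_kernel \<rho> k l = (\<rho>^(k+l) - \<rho>^(if k \<le> l then l-k else k-l))^2"

lemma grid_kernel_commute: "grid_kernel \<rho> k l = grid_kernel \<rho> l k"
  by (auto simp: grid_kernel_def add.commute)

lemma sum_grid_kernel_column:
  "(\<Sum>k<N. grid_kernel \<rho> k N)
    = (\<rho>^2)^N * (\<Sum>k<N. (\<rho>^2)^k) - 2 * real N * (\<rho>^2)^N + \<rho>^2 * (\<Sum>k<N. (\<rho>^2)^k)"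
proof -
  have summand: "grid_kernel \<rho> k N = (\<rho>^2)^N * (\<rho>^2)^k - 2 * (\<rho>^2)^N + (\<rho>^2)^(N-k)" if "k < N" for k
  proof -
    have "\<rho>^(k+N) * \<rho>^(N-k) = (\<rho>^2)^N"
      using that by (simp add: power_add[symmetric] power_mult[symmetric] mult_2)
    moreover have "(\<rho>^(k+N))^2 = (\<rho>^2)^N * (\<rho>^2)^k"
      by (simp add: power_mult[symmetric] power_add[symmetric] algebra_simps)
    moreover have "(\<rho>^(N-k))^2 = (\<rho>^2)^(N-k)"
      by (simp add: power_mult[symmetric] algebra_simps)
    ultimately show ?thesis
      using that unfolding grid_kernel_def by (simp add: power2_diff)
  qed
  have reverse: "(\<Sum>k<N. (\<rho>^2)^(N-k)) = \<rho>^2 * (\<Sum>k<N. (\<rho>^2)^k)"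
  proof -
    have "(\<Sum>k<N. (\<rho>^2)^(N-k)) = (\<Sum>k<N. (\<rho>^2)^(Suc (N - Suc k)))"
      by (rule sum.cong) (auto simp del: power_Suc simp add: Suc_diff_Suc)
    also have "\<dots> = (\<Sum>k<N. (\<rho>^2)^(Suc k))"
      using sum.nat_diff_reindex[of "\<lambda>i. (\<rho>^2)^(Suc i)" N] by simp
    finally show ?thesis
      by (simp add: sum_distrib_left)
  qed
  have "(\<Sum>k<N. grid_kernel \<rho> k N) = (\<Sum>k<N. (\<rho>^2)^N * (\<rho>^2)^k - 2 * (\<rho>^2)^N + (\<rho>^2)^(N-k))"
    by (rule sum.cong) (auto simp: summand)
  also have "\<dots> = (\<rho>^2)^N * (\<Sum>k<N. (\<rho>^2)^k) - 2 * real N * (\<rho>^2)^N + (\<Sum>k<N. (\<rho>^2)^(N-k))"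
    by (simp add: sum.distrib sum_subtractf sum_distrib_left)
  finally show ?thesis
    unfolding reverse .
qed

lemma sum_grid_kernel:
  "(\<rho>^2 - 1)^2 * (\<Sum>k<N. \<Sum>l<N. grid_kernel \<rho> k l)
    = ((\<rho>^2)^N - 1) * (4*\<rho>^2 + (\<rho>^2)^N + 1) - (\<rho>^2 - 1) * (\<rho>^2 + 4*(\<rho>^2)^N + 1) * real N"
proof (induction N)
  case 0
  then show ?case by simp
next
  case (Suc N)
  define x where "x = \<rho>^2"
  define G where "G = (\<Sum>k<N. x^k)"
  define S where "S = (\<Sum>k<N. \<Sum>l<N. grid_kernel \<rho> k l)"
  have G: "(x - 1) * G = x^N - 1"
    unfolding G_def by (rule power_diff_1_eq[symmetric])
  have "grid_kernel \<rho> N N = (x^N - 1)^2"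
    by (simp add: grid_kernel_def x_def power_mult[symmetric] mult_2)
  moreover have "(\<Sum>l<N. grid_kernel \<rho> N l) = (\<Sum>k<N. grid_kernel \<rho> k N)"
    by (rule sum.cong) (auto simp: grid_kernel_commute)
  ultimately have S_Suc: "(\<Sum>k<Suc N. \<Sum>l<Suc N. grid_kernel \<rho> k l) = S
      + 2 * (x^N * G - 2 * real N * x^N + x * G) + (x^N - 1)^2"
    by (simp add: sum.distrib sum_grid_kernel_column x_def G_def S_def)
  have "(x - 1)^2 * (S + 2 * (x^N * G - 2 * real N * x^N + x * G) + (x^N - 1)^2)
      = (x - 1)^2 * S + 2*(x - 1)*x^N*((x - 1)*G) + 2*(x - 1)*x*((x - 1)*G)
        - 4*real N*x^N*(x - 1)^2 + (x - 1)^2*(x^N - 1)^2"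
    by (simp add: algebra_simps power2_eq_square)
  also have "\<dots> = (x*x^N - 1)*(4*x + x*x^N + 1) - (x - 1)*(x + 4*(x*x^N) + 1)*(real N + 1)"
    unfolding G Suc.IH[folded x_def S_def] by (simp add: algebra_simps power2_eq_square)
  finally show ?case
    unfolding S_Suc by (simp add: x_def)
qed

lemma ou_cov_grid:
  assumes h: "h > 0"
  shows "ou_cov a \<sigma> (real k*h) (real l*h)
    = \<sigma>^2 * (exp (a*h)^(k+l) - exp (a*h)^(if k \<le> l then l-k else k-l)) / (2*a)"
proof -
  have "\<bar>real l*h - real k*h\<bar> = real (if k \<le> l then l-k else k-l) * h"
    using h by (simp add: of_nat_diff abs_mult flip: left_diff_distrib)
  then show ?thesis
    unfolding ou_cov_def by (simp add: exp_of_nat_mult[symmetric] algebra_simps)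
qed

lemma ou_cov_grid_diag:
  assumes h: "h > 0"
  shows "ou_cov a \<sigma> (real k*h) (real k*h) = \<sigma>^2 * (exp (2*a*h)^k - 1) / (2*a)"
proof -
  have "exp (a*h)^(k+k) = exp (2*a*h)^k"
    by (simp add: exp_of_nat_mult[symmetric] algebra_simps)
  then show ?thesis
    using ou_cov_grid[OF h, of a \<sigma> k k] by simp
qed

lemma ou_cov_grid_sq:
  assumes h: "h > 0"
  shows "(ou_cov a \<sigma> (real k*h) (real l*h))^2 = \<sigma>^4/(4*a^2) * grid_kernel (exp (a*h)) k l"
  unfolding ou_cov_grid[OF h] grid_kernel_def by (simp add: power_divide power_mult_distrib)

lemma integral_ou_cov_diag:
  fixes a \<sigma> T :: real
  assumes a: "a \<noteq> 0" and T: "T \<ge> 0"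
  shows "integral {0..T} (\<lambda>t. ou_cov a \<sigma> t t) = \<sigma>^2/(2*a) * ((exp (2*a*T) - 1)/(2*a) - T)"
proof -
  define F where "F t = \<sigma>^2 * (exp (2*a*t)/(2*a) - t) / (2*a)" for t
  have "((\<lambda>t. ou_cov a \<sigma> t t) has_integral (F T - F 0)) {0..T}"
  proof (rule fundamental_theorem_of_calculus)
    fix t :: real
    have "(F has_real_derivative \<sigma>^2 * (exp (2*a*t) * (2*a) / (2*a) - 1) / (2*a)) (at t within {0..T})"
      unfolding F_def by (auto intro!: derivative_eq_intros)
    then show "(F has_vector_derivative ou_cov a \<sigma> t t) (at t within {0..T})"
      using a by (simp add: ou_cov_def has_real_derivative_iff_has_vector_derivative algebra_simps)
  qed (rule T)
  then have "integral {0..T} (\<lambda>t. ou_cov a \<sigma> t t) = F T - F 0"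
    by (rule integral_unique)
  also have "\<dots> = \<sigma>^2/(2*a) * ((exp (2*a*T) - 1)/(2*a) - T)"
    unfolding F_def using a by (simp add: field_simps)
  finally show ?thesis .
qed

lemma E1_E2_identity:
  fixes a h T x R G F \<sigma> :: real and N M :: nat
  assumes a: "a < 0" and h: "h > 0" and N: "N > 0" and M: "M > 0"
    and T: "T = real N * h" and x: "x = exp (2*a*h)" and R: "R = exp (2*a*T)"
    and G: "(x - 1) * G = R - 1"
    and F: "(x - 1)^2 * F = (R - 1)*(4*x + R + 1) - (x - 1)*(x + 4*R + 1)*real N"
  shows "(h*\<sigma>^2/(2*a) * (G - real N) - \<sigma>^2/(2*a) * ((R - 1)/(2*a) - T))^2
      + (2*h^2*(\<sigma>^4/(4*a^2))*F) / real M
    = E1 \<sigma> h T a + E2 \<sigma> h T a / (real M * real N)"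
proof -
  have xn: "x - 1 \<noteq> 0"
    unfolding x using a h by (simp add: mult_neg_pos)
  have an: "a \<noteq> 0" and Nn: "real N \<noteq> 0" and Mn: "real M \<noteq> 0"
    using a N M by auto
  have G': "G = (R - 1)/(x - 1)"
    using G xn by (simp add: field_simps)
  have F': "F = ((R - 1)*(4*x + R + 1) - (x - 1)*(x + 4*R + 1)*real N)/(x - 1)^2"
    using F xn by (simp add: field_simps)
  have "h*\<sigma>^2/(2*a) * (G - real N) - \<sigma>^2/(2*a) * ((R - 1)/(2*a) - T)
      = \<sigma>^2*(R - 1)*(2*a*h - x + 1)/(4*a^2*(x - 1))" (is "?bias = _")
    unfolding G' T using xn an by (simp add: field_simps power2_eq_square)
  then have bias: "(h*\<sigma>^2/(2*a) * (G - real N) - \<sigma>^2/(2*a) * ((R - 1)/(2*a) - T))^2 = E1 \<sigma> h T a"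
    unfolding E1_def x[symmetric] R[symmetric] using xn an
    by (simp only:) (simp add: field_simps power2_eq_square power4_eq_xxxx)
  define K where "K = (R - 1)*(4*x + R + 1) - (x - 1)*(x + 4*R + 1)*real N"
  have "\<sigma>^4 * T * (h * (R - 1) * (4 * x + R + 1) - (x - 1) * (x + 4 * R + 1) * T) = real N * (\<sigma>^4*h^2*K)"
    unfolding K_def T by (simp add: algebra_simps power2_eq_square)
  then have "E2 \<sigma> h T a = real N * (\<sigma>^4*h^2*K) / (2 * a^2 * (x - 1)^2)"
    unfolding E2_def x[symmetric] R[symmetric] by simp
  then have variance: "(2*h^2*(\<sigma>^4/(4*a^2))*F) / real M = E2 \<sigma> h T a / (real M * real N)"
    unfolding F' K_def[symmetric] using xn an Nn Mn by (simp add: field_simps)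
  show ?thesis
    using bias variance by simp
qed

lemma grid_cost_mse_closed_form:
  fixes a \<sigma> h T :: real and N M :: nat
  assumes a: "a < 0" and h: "h > 0" and N: "N > 0" and M: "M > 0" and T: "T = real N * h"
  defines "m1 \<equiv> \<Sum>k<N. h * ou_cov a \<sigma> (real k*h) (real k*h)"
    and "m2 \<equiv> \<Sum>k<N. \<Sum>l<N. h^2 * (ou_cov a \<sigma> (real k*h) (real k*h) * ou_cov a \<sigma> (real l*h) (real l*h)
                + 2 * (ou_cov a \<sigma> (real k*h) (real l*h))^2)"
  shows "(m1 - \<sigma>^2/(2*a) * ((exp (2*a*T) - 1)/(2*a) - T))^2 + (m2 - m1^2) / real M
    = E1 \<sigma> h T a + E2 \<sigma> h T a / (real M * real N)"
proof -
  define \<rho> where "\<rho> = exp (a*h)"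
  have \<rho>2: "\<rho>^2 = exp (2*a*h)"
    unfolding \<rho>_def by (metis exp_double mult.assoc)
  have R: "exp (2*a*T) = (\<rho>^2)^N"
    unfolding \<rho>2 T by (simp add: exp_of_nat_mult[symmetric] algebra_simps)
  have "m1 = (\<Sum>k<N. h*\<sigma>^2/(2*a) * (exp (2*a*h)^k - 1))"
    unfolding m1_def ou_cov_grid_diag[OF h] by (simp add: algebra_simps)
  also have "\<dots> = h*\<sigma>^2/(2*a) * ((\<Sum>k<N. exp (2*a*h)^k) - real N)"
    by (simp only: sum_distrib_left[symmetric] sum_subtractf) simp
  finally have m1: "m1 = h*\<sigma>^2/(2*a) * ((\<Sum>k<N. exp (2*a*h)^k) - real N)" .
  have "m1^2 = (\<Sum>k<N. \<Sum>l<N. h^2 * (ou_cov a \<sigma> (real k*h) (real k*h) * ou_cov a \<sigma> (real l*h) (real l*h)))"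
    unfolding m1_def by (simp add: power2_eq_square sum_product algebra_simps)
  moreover have "m2 = (\<Sum>k<N. \<Sum>l<N. h^2 * (ou_cov a \<sigma> (real k*h) (real k*h) * ou_cov a \<sigma> (real l*h) (real l*h)))
      + (\<Sum>k<N. \<Sum>l<N. 2*h^2*(\<sigma>^4/(4*a^2)) * grid_kernel \<rho> k l)"
    unfolding m2_def \<rho>_def ou_cov_grid_sq[OF h] by (simp add: sum.distrib[symmetric] algebra_simps)
  ultimately have m2: "m2 - m1^2 = 2*h^2*(\<sigma>^4/(4*a^2)) * (\<Sum>k<N. \<Sum>l<N. grid_kernel \<rho> k l)"
    by (simp add: sum_distrib_left)
  have G: "(exp (2*a*h) - 1) * (\<Sum>k<N. exp (2*a*h)^k) = exp (2*a*T) - 1"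
    unfolding R \<rho>2 by (rule power_diff_1_eq[symmetric])
  have F: "(exp (2*a*h) - 1)^2 * (\<Sum>k<N. \<Sum>l<N. grid_kernel \<rho> k l)
      = (exp (2*a*T) - 1) * (4*exp (2*a*h) + exp (2*a*T) + 1)
        - (exp (2*a*h) - 1) * (exp (2*a*h) + 4*exp (2*a*T) + 1) * real N"
    unfolding R \<rho>2[symmetric] by (rule sum_grid_kernel)
  show ?thesis
    unfolding m2 unfolding m1 by (rule E1_E2_identity[OF a h N M T refl refl G F])
qed

theorem theorem3p1:
  fixes P :: "'a measure"
    and a \<sigma> T h :: real
    and N M B :: nat
    and w x :: "real \<Rightarrow> 'a \<Rightarrow> real"
    and ws xs :: "nat \<Rightarrow> real \<Rightarrow> 'a \<Rightarrow> real"
  assumes "a < 0" and "\<sigma> > 0" and "T > 0" and "h > 0"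
    and "N > 0" and "real N = T / h"
    and "M \<ge> 1" and "B = M * N"
    and "wiener_process P w" and "langevin_solution P a \<sigma> w x"
    and "\<forall>i\<in>{1..M}. wiener_process P (ws i)"
    and "prob_space.indep_vars P (\<lambda>_. Pi\<^sub>M UNIV (\<lambda>_::real. borel))
           (\<lambda>i \<omega>. (\<lambda>t. ws i t \<omega>)) {1..M}"
    and "\<forall>i\<in>{1..M}. langevin_solution P a \<sigma> (ws i) (xs i)"
  shows "prob_space.expectation P
           (\<lambda>\<omega>. ((1 / real M) * (\<Sum>i=1..M. \<Sum>k<N. h * (xs i (real k * h) \<omega>)^2)
                 - integral {0..T} (\<lambda>t. prob_space.expectation P (\<lambda>\<eta>. (x t \<eta>)^2)))^2)
         = E1 \<sigma> h T a + E2 \<sigma> h T a / real B"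
proof -
  note a = assms(1) and \<sigma> = assms(2) and h = assms(4)
  interpret prob_space P
    using assms(9) by (simp add: wiener_process_def)
  have W: "wiener_process P (ws i)" and X: "langevin_solution P a \<sigma> (ws i) (xs i)"
    if "i \<in> {1..M}" for i
    using assms(11,13) that by auto
  define cost where "cost i \<omega> = (\<Sum>k<N. h * (xs i (real k * h) \<omega>)^2)" for i \<omega>
  have "indep_vars (\<lambda>_. borel) (\<lambda>i \<omega>. \<Sum>k<N. h * (ou_grid_value a \<sigma> h k (\<lambda>t. ws i t \<omega>))^2) {1..M}"
    by (rule indep_vars_compose2[OF assms(12)]) measurable
  then have indep: "indep_vars (\<lambda>_. borel) cost {1..M}"
    using langevin_eq_ou_grid_value[OF W X less_imp_le[OF a] less_imp_le[OF \<sigma>] h]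
    by (subst (asm) indep_vars_cong_on_space[where Y=cost]) (auto simp: cost_def)
  have V: "integral {0..T} (\<lambda>t. expectation (\<lambda>\<eta>. (x t \<eta>)^2)) = \<sigma>^2/(2*a) * ((exp (2*a*T) - 1)/(2*a) - T)"
    using langevin_moments(2)[OF assms(9,10) a \<sigma>] integral_ou_cov_diag[of a T \<sigma>] a assms(3)
    by (subst integral_cong[where g="\<lambda>t. ou_cov a \<sigma> t t"]) auto
  have "T = real N * h"
    using assms(6) h by (simp add: field_simps)
  note closed_form = grid_cost_mse_closed_form[OF a h assms(5) _ this, of M \<sigma>]
  show ?thesis
    using indep_sample_mean_mse[OF _ _ indep] grid_cost_moments[OF W X a \<sigma> h] closed_form assms(7,8)
    unfolding V cost_def by simp
qed

end
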